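(* Let $d,D\in\mathbb{N}^+$ and let $\mathcal{F}\subseteq C(\mathbb{R}^{d(d+1)/2},\mathbb{R}^{D(D+1)/2})$ be dense for the topology of uniform convergence on compacts. Then for any $A\in P_d^+$ and $B\in P_D^+$, the set $\{\operatorname{Exp}_B\circ f\circ\operatorname{Log}_A: f\in\mathcal{F}\}$ is dense in $C(P_d^+,P_D^+)$ for the topology of uniform convergence on compacts. In particular, if $\sigma$ is a continuous, locally bounded and non-polynomial activation function, then $\{\operatorname{Exp}_B\circ f\circ\operatorname{Log}_A: f\in\mathcal{NN}\}$ is dense in $C(P_d^+,P_D^+)$ for this topology.
   Context: $P_d^+$ is the set of $d\times d$ real symmetric positive-definite matrices, a Cartan–Hadamard manifold under the affine-invariant Riemannian metric, with its usual topology (the uniform convergence on compacts topology on $C(P_d^+,P_D^+)$ is taken w.r.t. the Riemannian distance, which induces this topology). The space $\mathrm{Sym}_k$ of $k\times k$ symmetric matrices is identified with $\mathbb{R}^{k(k+1)/2}$ by a fixed linear isomorphism. For $A\in P_d^+$, $\operatorname{Log}_A:P_d^+\to\mathrm{Sym}_d$, $\operatorname{Log}_A(C)=\sqrt{A}\log(\sqrt{A}^{-1}C\sqrt{A}^{-1})\sqrt{A}$, and for $B\in P_D^+$, $\operatorname{Exp}_B:\mathrm{Sym}_D\to P_D^+$, $\operatorname{Exp}_B(V)=\sqrt{B}\exp(\sqrt{B}^{-1}V\sqrt{B}^{-1})\sqrt{B}$, where $\exp,\log$ are the matrix exponential and logarithm. $\mathcal{NN}$ is the set of feed-forward networks $f=W\circ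 f^{(J)}$, $f^{(j)}=\sigma\bullet(W^{(j)}\circ f^{(j-1)})$, $f^{(0)}(x)=x$, with affine maps $W,W^{(j)}$ of arbitrary widths, from $\mathbb{R}^{d(d+1)/2}$ to $\mathbb{R}^{D(D+1)/2}$. *)

theory Defs
  imports "HOL-Analysis.Analysis" "HOL-Computational_Algebra.Polynomial"
begin

definition sym_mats :: "(real^'n^'n) set" where
  "sym_mats = {M. transpose M = M}"

definition spd :: "(real^'n^'n) set" where
  "spd = {M. transpose M = M \<and> (\<forall>x::real^'n. x \<noteq> 0 \<longrightarrow> x \<bullet> (M *v x) > 0)}"

primrec mpow :: "real^'n^'n \<Rightarrow> nat \<Rightarrow> real^'n^'n" where
  "mpow M 0 = mat 1"
| "mpow M (Suc k) = M ** mpow M k"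

definition mexp :: "real^'n^'n \<Rightarrow> real^'n^'n" where
  "mexp M = (\<Sum>k. (1 / fact k) *\<^sub>R mpow M k)"

definition mlog :: "real^'n^'n \<Rightarrow> real^'n^'n" where
  "mlog C = (THE L. L \<in> sym_mats \<and> mexp L = C)"

definition msqrt :: "real^'n^'n \<Rightarrow> real^'n^'n" where
  "msqrt A = (THE S. S \<in> spd \<and> S ** S = A)"

text \<open>Riemannian logarithm and exponential maps of the affine-invariant metric.\<close>
definition RLog :: "real^'n^'n \<Rightarrow> real^'n^'n \<Rightarrow> real^'n^'n" where
  "RLog A C = msqrt A ** mlog (matrix_inv (msqrt A) ** C ** matrix_inv (msqrt A)) ** msqrt A"

definition RExp :: "real^'n^'n \<Rightarrow> real^'n^'n \<Rightarrow> real^'n^'n" where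
  "RExp B V = msqrt B ** mexp (matrix_inv (msqrt B) ** V ** matrix_inv (msqrt B)) ** msqrt B"

text \<open>Affine-invariant Riemannian distance: Frobenius norm of log(A^-1/2 B A^-1/2)
  (the norm on real^'n^'n is the Frobenius norm).\<close>
definition ai_dist :: "real^'n^'n \<Rightarrow> real^'n^'n \<Rightarrow> real" where
  "ai_dist A B = norm (mlog (matrix_inv (msqrt A) ** B ** matrix_inv (msqrt A)))"

definition ucc_dense :: "'a::topological_space set \<Rightarrow> 'b::topological_space set \<Rightarrow>
    ('b \<Rightarrow> 'b \<Rightarrow> real) \<Rightarrow> ('a \<Rightarrow> 'b) set \<Rightarrow> bool" where
  "ucc_dense X Y \<delta> F \<longleftrightarrow>
     (\<forall>g. continuous_on X g \<and> g ` X \<subseteq> Y \<longrightarrow>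
        (\<forall>K \<epsilon>. compact K \<and> K \<subseteq> X \<and> \<epsilon> > 0 \<longrightarrow>
           (\<exists>f\<in>F. \<forall>x\<in>K. \<delta> (f x) (g x) < \<epsilon>)))"

definition locally_bounded :: "(real \<Rightarrow> real) \<Rightarrow> bool" where
  "locally_bounded \<sigma> \<longleftrightarrow> (\<forall>x. \<exists>e>0. bounded (\<sigma> ` ball x e))"

definition is_polynomial_fun :: "(real \<Rightarrow> real) \<Rightarrow> bool" where
  "is_polynomial_fun \<sigma> \<longleftrightarrow> (\<exists>p::real poly. \<forall>x. \<sigma> x = poly p x)"

text \<open>A vector of R^w is
  represented as a function nat \<Rightarrow> real vanishing from index w on.\<close>
inductive nn_hidden :: "(real \<Rightarrow> real) \<Rightarrow> (real^'m \<Rightarrow> nat \<Rightarrow> real) \<Rightarrow> nat \<Rightarrow> bool"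
  for \<sigma> :: "real \<Rightarrow> real" where
  first: "nn_hidden \<sigma> (\<lambda>x i. if i < w then \<sigma> ((\<Sum>j\<in>UNIV. W i j * x $ j) + b i) else 0) w"
| step: "nn_hidden \<sigma> h p \<Longrightarrow>
         nn_hidden \<sigma> (\<lambda>x i. if i < q then \<sigma> ((\<Sum>k<p. W i k * h x k) + b i) else 0) q"

definition NN :: "(real \<Rightarrow> real) \<Rightarrow> (real^'m \<Rightarrow> real^'n) set" where
  "NN \<sigma> = {f. (\<exists>W b. f = (\<lambda>x. \<chi> j. (\<Sum>i\<in>UNIV. W j i * x $ i) + b j))
              \<or> (\<exists>h w W b. nn_hidden \<sigma> h w \<and> f = (\<lambda>x. \<chi> j. (\<Sum>k<w. W j k * h x k) + b j))}"

end

theory Submission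
  imports Defs
begin

text \<open>The Riemannian logarithm \<open>Log\<^sub>A\<close> is a homeomorphism of the positive-definite matrices onto
  the symmetric ones: by the spectral theorem \<open>exp\<close> is a bijection from symmetric onto
  positive-definite matrices, by invariance of domain it is a homeomorphism, and \<open>Log\<^sub>A\<close> is
  \<open>log\<close> conjugated by the congruence with \<open>\<surd>A\<close>. Composed with the linear identification of the
  symmetric matrices with a Euclidean space, it is a global chart with inverse \<open>Exp\<^sub>A\<close>. Density of
  \<open>F\<close> then transfers through the charts on both sides, because the affine-invariant distance is
  continuous and vanishes on the diagonal.

  For networks, density of \<open>NN\<close> is the universal approximation theorem of Leshno, Lin, Pinkus and
  Schocken, already with one hidden layer. In one variable, the closure under uniform convergence on
  compacts of the combinations of the \<open>\<sigma>(w t + b)\<close> is invariant under affine substitutions,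
  difference quotients and moving averages. The \<open>k\<close>-fold moving average of \<open>\<sigma>\<close> is \<open>C\<^sup>k\<close>, its
  \<open>k\<close>-th derivative being a moving average of the \<open>k\<close>-th difference quotient of \<open>\<sigma>\<close>, and
  differentiating \<open>k\<close> times in the weight \<open>w\<close> puts \<open>t\<^sup>k\<close> times that derivative into the
  closure. Hence either \<open>t\<^sup>k\<close> lies in the closure, or all \<open>k\<close>-th difference quotients of \<open>\<sigma>\<close>
  vanish, the smoothed versions of \<open>\<sigma>\<close> are polynomials of degree at most \<open>k\<close>, and so is their
  pointwise limit \<open>\<sigma>\<close>. Weierstrass approximation then yields all continuous functions of one
  variable; Stone--Weierstrass for sums of exponentials \<open>e\<^sup>a\<^sup>\<bullet>\<^sup>x\<close>, which are ridge functions,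
  yields several variables; and one network per output coordinate yields vector values.\<close>

section \<open>The spectral theorem for symmetric matrices\<close>

lemma continuous_on_matrix_mult [continuous_intros]:
  fixes f :: "'a::topological_space \<Rightarrow> real^'n^'m" and g :: "'a \<Rightarrow> real^'p^'n"
  assumes "continuous_on S f" "continuous_on S g"
  shows "continuous_on S (\<lambda>x. f x ** g x)"
  unfolding matrix_matrix_mult_def by (intro continuous_intros assms)

lemma continuous_on_matrix_vector_mult [continuous_intros]:
  fixes f :: "'a::topological_space \<Rightarrow> real^'n^'m" and g :: "'a \<Rightarrow> real^'n"
  assumes "continuous_on S f" "continuous_on S g"
  shows "continuous_on S (\<lambda>x. f x *v g x)"
  unfolding matrix_vector_mult_def by (intro continuous_intros assms)

lemma symmetric_matrix_inner_commute:
  fixes M :: "real^'n^'n"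
  assumes "transpose M = M"
  shows "(M *v x) \<bullet> y = x \<bullet> (M *v y)"
proof -
  have "x \<bullet> (M *v y) = (x v* M) \<bullet> y" by (simp add: dot_lmul_matrix)
  also have "x v* M = transpose M *v x" by simp
  finally show ?thesis using assms by (simp add: inner_commute)
qed

lemma linear_le_quadratic_imp_zero:
  fixes a c :: real
  assumes "a \<ge> 0" and "\<And>t. 2 * t * a \<le> t\<^sup>2 * c"
  shows "a = 0"
proof (rule ccontr)
  assume "a \<noteq> 0"
  with assms(1) have pos: "a > 0" by simp
  define t where "t = a / (\<bar>c\<bar> + 1)"
  have tpos: "t > 0" unfolding t_def using pos by simp
  have "2 * a \<le> t * c" using assms(2)[of t] tpos by (simp add: power2_eq_square)
  also have "t * c \<le> t * \<bar>c\<bar>" using tpos by (simp add: mult_left_mono)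
  also have "t * \<bar>c\<bar> < a" unfolding t_def using pos by (simp add: field_simps)
  finally show False using pos by simp
qed

text \<open>Perturbing the maximiser in the direction of the residual \<open>w\<close> would otherwise increase the
  Rayleigh quotient to first order.\<close>
lemma rayleigh_maximiser_eigenvector:
  fixes M :: "real^'n^'n"
  assumes sym: "transpose M = M" and S: "subspace S" and inv: "\<And>x. x \<in> S \<Longrightarrow> M *v x \<in> S"
    and vS: "v \<in> S" and vv: "v \<bullet> v = 1"
    and max: "\<And>y. y \<in> S \<Longrightarrow> y \<bullet> (M *v y) \<le> (v \<bullet> (M *v v)) * (y \<bullet> y)"
  shows "M *v v = (v \<bullet> (M *v v)) *\<^sub>R v"
proof -
  define l where "l = v \<bullet> (M *v v)"
  define w where "w = M *v v - l *\<^sub>R v"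
  have wS: "w \<in> S" unfolding w_def using S vS inv by (simp add: subspace_diff subspace_scale)
  have vw: "v \<bullet> w = 0" unfolding w_def l_def using vv by (simp add: inner_diff_right)
  have wMv: "w \<bullet> (M *v v) = w \<bullet> w"
    using vw by (simp add: w_def inner_diff_right inner_commute)
  have perturb: "2 * t * (w \<bullet> w) \<le> t\<^sup>2 * (l * (w \<bullet> w) - w \<bullet> (M *v w))" for t
  proof -
    have "v + t *\<^sub>R w \<in> S" using S vS wS by (simp add: subspace_add subspace_scale)
    from max[OF this, folded l_def]
    have "(v + t *\<^sub>R w) \<bullet> (M *v (v + t *\<^sub>R w)) \<le> l * ((v + t *\<^sub>R w) \<bullet> (v + t *\<^sub>R w))" .
    moreover have "(v + t *\<^sub>R w) \<bullet> (M *v (v + t *\<^sub>R w))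
        = l + 2 * t * (w \<bullet> w) + t\<^sup>2 * (w \<bullet> (M *v w))"
    proof -
      have "v \<bullet> (M *v w) = w \<bullet> (M *v v)"
        using symmetric_matrix_inner_commute[OF sym, of v w] by (simp add: inner_commute)
      then show ?thesis
        by (simp add: matrix_vector_right_distrib matrix_vector_mult_scaleR inner_add_left
            inner_add_right l_def wMv power2_eq_square algebra_simps)
    qed
    moreover have "(v + t *\<^sub>R w) \<bullet> (v + t *\<^sub>R w) = 1 + t\<^sup>2 * (w \<bullet> w)"
      using vv vw
      by (simp add: inner_add_left inner_add_right inner_commute power2_eq_square algebra_simps)
    ultimately have "l + 2 * t * (w \<bullet> w) + t\<^sup>2 * (w \<bullet> (M *v w)) \<le> l * (1 + t\<^sup>2 * (w \<bullet> w))"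
      by metis
    then show ?thesis by (simp add: algebra_simps)
  qed
  have "w \<bullet> w = 0" using perturb by (intro linear_le_quadratic_imp_zero) auto
  then show ?thesis by (simp add: w_def l_def)
qed

lemma symmetric_matrix_eigenvector_in_invariant_subspace:
  fixes M :: "real^'n^'n"
  assumes sym: "transpose M = M" and S: "subspace S" and nz: "S \<noteq> {0}"
    and inv: "\<And>x. x \<in> S \<Longrightarrow> M *v x \<in> S"
  obtains v l where "v \<in> S" "norm v = 1" "M *v v = l *\<^sub>R v"
proof -
  let ?T = "S \<inter> sphere 0 1"
  obtain x where x: "x \<in> S" "x \<noteq> 0" using nz S subspace_0 by blast
  have "(1 / norm x) *\<^sub>R x \<in> ?T" using x S by (simp add: subspace_scale)
  then have ne: "?T \<noteq> {}" by blast
  have cpt: "compact ?T" by (simp add: S closed_subspace closed_Int_compact)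
  have "continuous_on ?T (\<lambda>x. x \<bullet> (M *v x))" by (intro continuous_intros)
  then obtain v where v: "v \<in> ?T"
    and vmax: "\<And>y. y \<in> ?T \<Longrightarrow> y \<bullet> (M *v y) \<le> v \<bullet> (M *v v)"
    using continuous_attains_sup[OF cpt ne] by blast
  have max: "y \<bullet> (M *v y) \<le> (v \<bullet> (M *v v)) * (y \<bullet> y)" if yS: "y \<in> S" for y
  proof (cases "y = 0")
    case False
    let ?z = "(1 / norm y) *\<^sub>R y"
    have "?z \<in> ?T" using yS False S by (simp add: subspace_scale)
    then have "?z \<bullet> (M *v ?z) \<le> v \<bullet> (M *v v)" by (rule vmax)
    then have "(1 / norm y)\<^sup>2 * (y \<bullet> (M *v y)) \<le> v \<bullet> (M *v v)"
      by (simp add: matrix_vector_mult_scaleR power2_eq_square algebra_simps)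
    moreover have "y \<bullet> y = (norm y)\<^sup>2" by (simp add: power2_norm_eq_inner)
    moreover have "norm y > 0" using False by simp
    ultimately show ?thesis by (simp add: field_simps power2_eq_square)
  qed simp
  have vS: "v \<in> S" and nv: "norm v = 1" using v by auto
  then have "v \<bullet> v = 1" by (simp add: norm_eq_1)
  from rayleigh_maximiser_eigenvector[OF sym S inv vS this max] show ?thesis by (rule that[OF vS nv])
qed

lemma span_insert_unit_orthogonal_complement:
  assumes S: "subspace S" and vS: "v \<in> S" and vv: "v \<bullet> v = 1"
    and U: "span U = S \<inter> {x. v \<bullet> x = 0}"
  shows "span (insert v U) = S"
proof
  have "U \<subseteq> S" using U span_superset[of U] by blast
  then show "span (insert v U) \<subseteq> S" using vS S by (simp add: span_minimal)
  show "S \<subseteq> span (insert v U)"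
  proof
    fix x assume xS: "x \<in> S"
    have "x - (v \<bullet> x) *\<^sub>R v \<in> S" using xS vS S by (simp add: subspace_diff subspace_scale)
    moreover have "v \<bullet> (x - (v \<bullet> x) *\<^sub>R v) = 0" using vv by (simp add: inner_diff_right)
    ultimately have "x - (v \<bullet> x) *\<^sub>R v \<in> span U" using U by simp
    then show "x \<in> span (insert v U)" using span_breakdown_eq[of x v U] by blast
  qed
qed

lemma symmetric_matrix_orthogonal_complement_invariant:
  fixes M :: "real^'n^'n"
  assumes sym: "transpose M = M" and S: "\<forall>x\<in>S. M *v x \<in> S" and v: "M *v v = l *\<^sub>R v"
    and x: "x \<in> S \<inter> {x. v \<bullet> x = 0}"
  shows "M *v x \<in> S \<inter> {x. v \<bullet> x = 0}"
proof -
  have "v \<bullet> (M *v x) = (M *v v) \<bullet> x" using symmetric_matrix_inner_commute[OF sym] by simp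
  then show ?thesis using S v x by auto
qed

lemma symmetric_matrix_invariant_subspace_eigenbasis:
  fixes M :: "real^'n^'n"
  assumes sym: "transpose M = M"
  shows "subspace S \<Longrightarrow> (\<forall>x\<in>S. M *v x \<in> S) \<Longrightarrow>
    \<exists>U. U \<subseteq> S \<and> finite U \<and> pairwise orthogonal U \<and>
        (\<forall>u\<in>U. norm u = 1 \<and> (\<exists>l. M *v u = l *\<^sub>R u)) \<and> span U = S"
proof (induction "dim S" arbitrary: S rule: less_induct)
  case less
  show ?case
  proof (cases "S = {0}")
    case True
    then show ?thesis by (intro exI[of _ "{}"]) auto
  next
    case False
    obtain v l where vS: "v \<in> S" and nv: "norm v = 1" and Mv: "M *v v = l *\<^sub>R v"
      using symmetric_matrix_eigenvector_in_invariant_subspace[OF sym less.prems(1) False]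
        less.prems(2) by blast
    have vv: "v \<bullet> v = 1" using nv by (simp add: norm_eq_1)
    define S' where "S' = S \<inter> {x. v \<bullet> x = 0}"
    have sS': "subspace S'" unfolding S'_def
      by (simp add: less.prems(1) subspace_hyperplane subspace_inter)
    have invS': "\<forall>x\<in>S'. M *v x \<in> S'"
      unfolding S'_def using symmetric_matrix_orthogonal_complement_invariant[OF sym less.prems(2) Mv]
      by blast
    have "v \<notin> S'" using vv by (simp add: S'_def)
    then have "S' \<subset> S" using vS unfolding S'_def by blast
    then have "dim S' < dim S"
      using dim_psubset sS' less.prems(1) by (metis span_eq_iff)
    from less.hyps[OF this sS' invS'] obtain U' where U':
      "U' \<subseteq> S'" "finite U'" "pairwise orthogonal U'"
      "\<forall>u\<in>U'. norm u = 1 \<and> (\<exists>l. M *v u = l *\<^sub>R u)" "span U' = S'" by blast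
    have "pairwise orthogonal (insert v U')"
      using U'(1,3) unfolding pairwise_insert
      by (auto simp: S'_def orthogonal_def inner_commute)
    moreover have "span (insert v U') = S"
      using span_insert_unit_orthogonal_complement less.prems(1) vS vv U'(5) S'_def by blast
    ultimately show ?thesis
      using U' vS nv Mv \<open>S' \<subset> S\<close> by (intro exI[of _ "insert v U'"]) auto
  qed
qed

definition orthonormal_basis :: "'a::real_inner set \<Rightarrow> bool" where
  "orthonormal_basis U \<longleftrightarrow>
     finite U \<and> pairwise orthogonal U \<and> (\<forall>u\<in>U. norm u = 1) \<and> span U = UNIV"

theorem symmetric_matrix_eigenbasis:
  fixes M :: "real^'n^'n"
  assumes "transpose M = M"
  obtains U a where "orthonormal_basis U" "\<And>u. u \<in> U \<Longrightarrow> M *v u = a u *\<^sub>R u"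
proof -
  obtain U where "finite U" "pairwise orthogonal U"
      "\<forall>u\<in>U. norm u = 1 \<and> (\<exists>l. M *v u = l *\<^sub>R u)" "span U = UNIV"
    using symmetric_matrix_invariant_subspace_eigenbasis[OF assms, of UNIV] by auto
  then show ?thesis using that unfolding orthonormal_basis_def by metis
qed

definition outer_prod :: "real^'n \<Rightarrow> real^'n \<Rightarrow> real^'n^'n" where
  "outer_prod u v = (\<chi> i j. u$i * v$j)"

definition spectral_matrix :: "(real^'n) set \<Rightarrow> (real^'n \<Rightarrow> real) \<Rightarrow> real^'n^'n" where
  "spectral_matrix U c = (\<Sum>u\<in>U. c u *\<^sub>R outer_prod u u)"

lemma outer_prod_mult_vec: "outer_prod u v *v x = (v \<bullet> x) *\<^sub>R u"
  by (simp add: vec_eq_iff outer_prod_def matrix_vector_mult_def inner_vec_def sum_distrib_left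
      sum_distrib_right mult.assoc mult.commute mult.left_commute)

lemma sum_matrix_vector_mult: "(\<Sum>u\<in>U. A u) *v (x::real^'n) = (\<Sum>u\<in>U. A u *v x)"
  by (induction U rule: infinite_finite_induct) (auto simp: matrix_vector_mult_add_rdistrib)

lemma matrix_vector_mult_sum: "A *v (\<Sum>u\<in>U. f u) = (\<Sum>u\<in>U. A *v (f u::real^'n))"
  by (induction U rule: infinite_finite_induct) (auto simp: matrix_vector_right_distrib)

lemma spectral_matrix_mult_vec: "spectral_matrix U c *v x = (\<Sum>u\<in>U. (c u * (u \<bullet> x)) *\<^sub>R u)"
  by (simp add: spectral_matrix_def sum_matrix_vector_mult scaleR_matrix_vector_assoc[symmetric]
      outer_prod_mult_vec)

lemma orthonormal_basis_inner_sum: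
  assumes "orthonormal_basis U" "w \<in> U"
  shows "w \<bullet> (\<Sum>u\<in>U. g u *\<^sub>R u) = g w"
proof -
  have fin: "finite U" and orth: "pairwise orthogonal U" and nrm: "\<forall>u\<in>U. norm u = 1"
    using assms(1) by (auto simp: orthonormal_basis_def)
  have "w \<bullet> (\<Sum>u\<in>U. g u *\<^sub>R u) = (\<Sum>u\<in>U. g u * (w \<bullet> u))"
    by (simp add: inner_sum_right)
  also have "\<dots> = g w * (w \<bullet> w) + (\<Sum>u\<in>U - {w}. g u * (w \<bullet> u))"
    using fin assms(2) by (simp add: sum.remove)
  also have "(\<Sum>u\<in>U - {w}. g u * (w \<bullet> u)) = 0"
    using orth assms(2) by (intro sum.neutral) (auto simp: pairwise_def orthogonal_def)
  also have "w \<bullet> w = 1" using nrm assms(2) by (simp add: norm_eq_1)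
  finally show ?thesis by simp
qed

lemma orthonormal_basis_expansion:
  assumes "orthonormal_basis U"
  shows "(\<Sum>u\<in>U. (u \<bullet> x) *\<^sub>R u) = x"
proof -
  define y where "y = x - (\<Sum>u\<in>U. (u \<bullet> x) *\<^sub>R u)"
  have "orthogonal y w" if "w \<in> U" for w
    using orthonormal_basis_inner_sum[OF assms that, of "\<lambda>u. u \<bullet> x"]
    by (simp add: y_def orthogonal_def inner_diff_right inner_commute)
  then have "orthogonal y y"
    using orthogonal_to_span[of y U y] assms by (auto simp: orthonormal_basis_def)
  then show ?thesis by (simp add: y_def orthogonal_def)
qed

lemma matrix_eq_on_orthonormal_basis:
  fixes X Y :: "real^'n^'n"
  assumes U: "orthonormal_basis U" and XY: "\<And>u. u \<in> U \<Longrightarrow> X *v u = Y *v u"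
  shows "X = Y"
proof -
  have "X *v x = Y *v x" for x
  proof -
    have "X *v x = X *v (\<Sum>u\<in>U. (u \<bullet> x) *\<^sub>R u)" using orthonormal_basis_expansion[OF U] by simp
    also have "\<dots> = (\<Sum>u\<in>U. (u \<bullet> x) *\<^sub>R (X *v u))"
      by (simp add: matrix_vector_mult_sum matrix_vector_mult_scaleR)
    also have "\<dots> = (\<Sum>u\<in>U. (u \<bullet> x) *\<^sub>R (Y *v u))" using XY by simp
    also have "\<dots> = Y *v (\<Sum>u\<in>U. (u \<bullet> x) *\<^sub>R u)"
      by (simp add: matrix_vector_mult_sum matrix_vector_mult_scaleR)
    also have "\<dots> = Y *v x" using orthonormal_basis_expansion[OF U] by simp
    finally show ?thesis .
  qed
  then show ?thesis by (simp add: matrix_eq)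
qed

lemma spectral_matrix_eigenvector:
  assumes "orthonormal_basis U" "w \<in> U"
  shows "spectral_matrix U c *v w = c w *\<^sub>R w"
proof -
  have fin: "finite U" and orth: "pairwise orthogonal U" and nrm: "\<forall>u\<in>U. norm u = 1"
    using assms(1) by (auto simp: orthonormal_basis_def)
  have "spectral_matrix U c *v w = (c w * (w \<bullet> w)) *\<^sub>R w + (\<Sum>u\<in>U - {w}. (c u * (u \<bullet> w)) *\<^sub>R u)"
    using fin assms(2) by (simp add: spectral_matrix_mult_vec sum.remove)
  also have "(\<Sum>u\<in>U - {w}. (c u * (u \<bullet> w)) *\<^sub>R u) = 0"
    using orth assms(2) by (intro sum.neutral) (auto simp: pairwise_def orthogonal_def)
  also have "w \<bullet> w = 1" using nrm assms(2) by (simp add: norm_eq_1)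
  finally show ?thesis by simp
qed

lemma spectral_matrix_eigenvalue:
  assumes "orthonormal_basis U" "spectral_matrix U c *v x = d *\<^sub>R x" "w \<in> U" "w \<bullet> x \<noteq> 0"
  shows "c w = d"
proof -
  have "w \<bullet> (spectral_matrix U c *v x) = c w * (w \<bullet> x)"
    using orthonormal_basis_inner_sum[OF assms(1,3), of "\<lambda>u. c u * (u \<bullet> x)"]
    by (simp add: spectral_matrix_mult_vec)
  then show ?thesis using assms(2,4) by simp
qed

lemma spectral_matrix_eigenvectorI:
  assumes "orthonormal_basis U" "\<And>w. w \<in> U \<Longrightarrow> w \<bullet> x \<noteq> 0 \<Longrightarrow> c w = d"
  shows "spectral_matrix U c *v x = d *\<^sub>R x"
proof -
  have "spectral_matrix U c *v x = (\<Sum>u\<in>U. (c u * (u \<bullet> x)) *\<^sub>R u)"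
    by (rule spectral_matrix_mult_vec)
  also have "\<dots> = (\<Sum>u\<in>U. (d * (u \<bullet> x)) *\<^sub>R u)"
    using assms(2) by (intro sum.cong) (auto simp del: scaleR_eq_iff)
  also have "\<dots> = d *\<^sub>R (\<Sum>u\<in>U. (u \<bullet> x) *\<^sub>R u)" by (simp add: scaleR_sum_right)
  also have "\<dots> = d *\<^sub>R x" using orthonormal_basis_expansion[OF assms(1)] by simp
  finally show ?thesis .
qed

lemma matrix_eq_spectral_matrix:
  assumes "orthonormal_basis U" "\<And>u. u \<in> U \<Longrightarrow> M *v u = a u *\<^sub>R u"
  shows "M = spectral_matrix U a"
  using assms by (intro matrix_eq_on_orthonormal_basis[OF assms(1)]) (simp add: spectral_matrix_eigenvector)

lemma spectral_matrix_mult: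
  assumes "orthonormal_basis U"
  shows "spectral_matrix U c ** spectral_matrix U d = spectral_matrix U (\<lambda>u. c u * d u)"
  by (rule matrix_eq_on_orthonormal_basis[OF assms])
    (simp add: spectral_matrix_eigenvector[OF assms] matrix_vector_mul_assoc[symmetric]
      matrix_vector_mult_scaleR)

lemma scaleR_spectral_matrix: "k *\<^sub>R spectral_matrix U c = spectral_matrix U (\<lambda>u. k * c u)"
  by (simp add: spectral_matrix_def scaleR_sum_right)

lemma spectral_matrix_one:
  assumes "orthonormal_basis U"
  shows "spectral_matrix U (\<lambda>u. 1) = mat 1"
  by (rule matrix_eq_on_orthonormal_basis[OF assms]) (simp add: spectral_matrix_eigenvector[OF assms])

lemma spectral_matrix_cong: "(\<And>u. u \<in> U \<Longrightarrow> c u = d u) \<Longrightarrow> spectral_matrix U c = spectral_matrix U d"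
  by (simp add: spectral_matrix_def)

lemma transpose_spectral_matrix: "transpose (spectral_matrix U c) = spectral_matrix U c"
  by (simp add: spectral_matrix_def transpose_def outer_prod_def vec_eq_iff sum_component
      mult.commute mult.left_commute)

lemma spectral_matrix_spd:
  assumes U: "orthonormal_basis U" and pos: "\<And>u. u \<in> U \<Longrightarrow> c u > 0"
  shows "spectral_matrix U c \<in> spd"
proof -
  have "x \<bullet> (spectral_matrix U c *v x) > 0" if "x \<noteq> 0" for x
  proof -
    have "\<exists>w\<in>U. w \<bullet> x \<noteq> 0"
    proof (rule ccontr)
      assume "\<not> ?thesis"
      then have "x = 0" using orthonormal_basis_expansion[OF U, of x] by simp
      with \<open>x \<noteq> 0\<close> show False ..
    qed
    then obtain w where w: "w \<in> U" "w \<bullet> x \<noteq> 0" by blast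
    have "0 < c w * (w \<bullet> x)\<^sup>2" using w pos by simp
    also have "\<dots> \<le> (\<Sum>u\<in>U. c u * (u \<bullet> x)\<^sup>2)"
      using U w pos by (intro member_le_sum) (auto simp: orthonormal_basis_def less_imp_le)
    also have "\<dots> = x \<bullet> (spectral_matrix U c *v x)"
      by (simp add: spectral_matrix_mult_vec inner_sum_right power2_eq_square inner_commute mult.assoc)
    finally show ?thesis .
  qed
  then show ?thesis using transpose_spectral_matrix unfolding spd_def by blast
qed

lemma mpow_spectral_matrix:
  assumes "orthonormal_basis U"
  shows "mpow (spectral_matrix U c) k = spectral_matrix U (\<lambda>u. c u ^ k)"
  by (induction k) (simp_all add: spectral_matrix_one[OF assms] spectral_matrix_mult[OF assms])

lemma mexp_spectral_matrix:
  assumes "orthonormal_basis U"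
  shows "mexp (spectral_matrix U c) = spectral_matrix U (\<lambda>u. exp (c u))"
proof -
  have "(\<lambda>k. (1 / fact k) *\<^sub>R mpow (spectral_matrix U c) k)
      = (\<lambda>k. \<Sum>u\<in>U. (c u ^ k / fact k) *\<^sub>R outer_prod u u)"
    unfolding mpow_spectral_matrix[OF assms] by (simp add: spectral_matrix_def scaleR_sum_right)
  moreover have "(\<lambda>k. \<Sum>u\<in>U. (c u ^ k / fact k) *\<^sub>R outer_prod u u) sums
      (\<Sum>u\<in>U. exp (c u) *\<^sub>R outer_prod u u)"
  proof (rule sums_sum)
    fix u
    have "(\<lambda>k. c u ^ k / fact k) sums exp (c u)"
      using exp_converges[of "c u"] by (simp add: divide_inverse mult.commute)
    then show "(\<lambda>k. (c u ^ k / fact k) *\<^sub>R outer_prod u u) sums (exp (c u) *\<^sub>R outer_prod u u)"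
      by (rule sums_scaleR_left)
  qed
  ultimately show ?thesis unfolding mexp_def spectral_matrix_def by (simp add: sums_iff)
qed

section \<open>Exponential and logarithm of symmetric matrices\<close>

lemma spd_imp_symmetric: "C \<in> spd \<Longrightarrow> transpose C = C"
  by (simp add: spd_def)

lemma spd_subset_sym_mats: "spd \<subseteq> sym_mats"
  by (auto simp: spd_def sym_mats_def)

lemma transpose_add: "transpose (A + B) = transpose A + transpose (B::real^'n^'m)"
  by (simp add: transpose_def vec_eq_iff)

lemma transpose_zero: "transpose (0::real^'n^'m) = 0"
  by (simp add: transpose_def vec_eq_iff)

lemma subspace_sym_mats: "subspace (sym_mats :: (real^'n^'n) set)"
  unfolding subspace_def sym_mats_def
  by (auto simp: transpose_add transpose_scalar transpose_zero)

lemma sym_mats_eq_spectral_matrix: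
  assumes "L \<in> sym_mats"
  obtains U a where "orthonormal_basis U" "L = spectral_matrix U a"
proof -
  obtain U a where "orthonormal_basis U" "\<And>u. u \<in> U \<Longrightarrow> L *v u = a u *\<^sub>R u"
    using symmetric_matrix_eigenbasis[of L] assms unfolding sym_mats_def by blast
  then show ?thesis using that matrix_eq_spectral_matrix by blast
qed

lemma spd_eq_spectral_matrix:
  assumes "C \<in> spd"
  obtains U a where "orthonormal_basis U" "C = spectral_matrix U a" "\<And>u. u \<in> U \<Longrightarrow> a u > 0"
proof -
  obtain U a where U: "orthonormal_basis U" "\<And>u. u \<in> U \<Longrightarrow> C *v u = a u *\<^sub>R u"
    using symmetric_matrix_eigenbasis[OF spd_imp_symmetric[OF assms]] by blast
  have "a u > 0" if "u \<in> U" for u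
  proof -
    have n: "norm u = 1" using U(1) that by (auto simp: orthonormal_basis_def)
    then have "u \<noteq> 0" by auto
    then have "u \<bullet> (C *v u) > 0" using assms by (simp add: spd_def)
    moreover have "u \<bullet> (C *v u) = a u" using U(2) that n by (simp add: norm_eq_1)
    ultimately show ?thesis by simp
  qed
  then show ?thesis using that U matrix_eq_spectral_matrix by blast
qed

lemma mexp_sym_mats_spd:
  assumes "L \<in> sym_mats"
  shows "mexp L \<in> spd"
proof -
  obtain U a where "orthonormal_basis U" "L = spectral_matrix U a"
    using sym_mats_eq_spectral_matrix[OF assms] by blast
  then show ?thesis by (simp add: mexp_spectral_matrix spectral_matrix_spd)
qed

lemma mexp_surj_spd:
  assumes "C \<in> spd"
  obtains L where "L \<in> sym_mats" "mexp L = C"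
proof -
  obtain U a where U: "orthonormal_basis U" "C = spectral_matrix U a" "\<And>u. u \<in> U \<Longrightarrow> a u > 0"
    using spd_eq_spectral_matrix[OF assms] by blast
  have "mexp (spectral_matrix U (\<lambda>u. ln (a u))) = C"
    using U by (simp add: mexp_spectral_matrix cong: spectral_matrix_cong)
  moreover have "spectral_matrix U (\<lambda>u. ln (a u)) \<in> sym_mats"
    by (simp add: sym_mats_def transpose_spectral_matrix)
  ultimately show ?thesis using that by blast
qed

text \<open>Both logarithms are read off the common exponential: the eigenvalue of \<open>L\<^sub>1\<close> on any
  eigenvector \<open>u\<close> of \<open>L\<^sub>2\<close> is the logarithm of the eigenvalue of \<open>exp L\<^sub>2\<close> on \<open>u\<close>.\<close>
lemma inj_on_mexp_sym_mats: "inj_on mexp sym_mats"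
proof (rule inj_onI)
  fix L1 L2 :: "real^'n^'n"
  assume L: "L1 \<in> sym_mats" "L2 \<in> sym_mats" "mexp L1 = mexp L2"
  obtain U1 b1 where U1: "orthonormal_basis U1" "L1 = spectral_matrix U1 b1"
    using sym_mats_eq_spectral_matrix[OF L(1)] by blast
  obtain U2 b2 where U2: "orthonormal_basis U2" "L2 = spectral_matrix U2 b2"
    using sym_mats_eq_spectral_matrix[OF L(2)] by blast
  show "L1 = L2"
  proof (rule matrix_eq_on_orthonormal_basis[OF U2(1)])
    fix x assume x: "x \<in> U2"
    have "spectral_matrix U1 (\<lambda>u. exp (b1 u)) = spectral_matrix U2 (\<lambda>u. exp (b2 u))"
      using L(3) U1 U2 by (simp add: mexp_spectral_matrix)
    then have "spectral_matrix U1 (\<lambda>u. exp (b1 u)) *v x = exp (b2 x) *\<^sub>R x"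
      using spectral_matrix_eigenvector[OF U2(1) x] by simp
    then have "b1 w = b2 x" if "w \<in> U1" "w \<bullet> x \<noteq> 0" for w
      using spectral_matrix_eigenvalue[OF U1(1) _ that] by fastforce
    then have "spectral_matrix U1 b1 *v x = b2 x *\<^sub>R x"
      by (rule spectral_matrix_eigenvectorI[OF U1(1)])
    then show "L1 *v x = L2 *v x" using U1(2) U2(2) spectral_matrix_eigenvector[OF U2(1) x] by simp
  qed
qed

lemma
  assumes "C \<in> spd"
  shows mlog_sym_mats: "mlog C \<in> sym_mats" and mexp_mlog: "mexp (mlog C) = C"
proof -
  obtain L where L: "L \<in> sym_mats" "mexp L = C" using mexp_surj_spd[OF assms] .
  moreover have "L' = L" if "L' \<in> sym_mats \<and> mexp L' = C" for L'
    using that L inj_onD[OF inj_on_mexp_sym_mats, of L' L] by simp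
  ultimately have "\<exists>!L. L \<in> sym_mats \<and> mexp L = C" by blast
  then have "mlog C \<in> sym_mats \<and> mexp (mlog C) = C" unfolding mlog_def by (rule theI')
  then show "mlog C \<in> sym_mats" "mexp (mlog C) = C" by (rule conjunct1, rule conjunct2)
qed

lemma mlog_mexp:
  assumes "L \<in> sym_mats"
  shows "mlog (mexp L) = L"
proof -
  have C: "mexp L \<in> spd" by (rule mexp_sym_mats_spd[OF assms])
  show ?thesis
    using mexp_mlog[OF C] mlog_sym_mats[OF C] assms by (rule inj_onD[OF inj_on_mexp_sym_mats])
qed

lemma mexp_scaleR_add:
  assumes "L \<in> sym_mats"
  shows "mexp (a *\<^sub>R L) ** mexp (b *\<^sub>R L) = mexp ((a + b) *\<^sub>R L)"
proof -
  obtain U c where U: "orthonormal_basis U" "L = spectral_matrix U c"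
    using sym_mats_eq_spectral_matrix[OF assms] by blast
  show ?thesis using U
    by (simp add: scaleR_spectral_matrix mexp_spectral_matrix spectral_matrix_mult distrib_right exp_add)
qed

lemma mexp_zero: "mexp (0::real^'n^'n) = mat 1"
proof -
  obtain U :: "(real^'n) set" where U: "orthonormal_basis U"
    using symmetric_matrix_eigenbasis[OF transpose_zero] by blast
  have "mexp (0::real^'n^'n) = mexp (spectral_matrix U (\<lambda>u. 0))" by (simp add: spectral_matrix_def)
  also have "\<dots> = mat 1" by (simp add: mexp_spectral_matrix spectral_matrix_one U)
  finally show ?thesis .
qed

lemma mexp_scaleR_inverse:
  assumes "L \<in> sym_mats"
  shows "mexp (a *\<^sub>R L) ** mexp (- a *\<^sub>R L) = mat 1"
  using mexp_scaleR_add[OF assms, of a "- a"] by (simp add: mexp_zero)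

lemma matrix_inv_eqI:
  fixes A X :: "real^'n^'n"
  assumes "A ** X = mat 1" "X ** A = mat 1"
  shows "matrix_inv A = X"
proof -
  have "A ** matrix_inv A = mat 1 \<and> matrix_inv A ** A = mat 1"
    unfolding matrix_inv_def using assms by (intro someI_ex[of "\<lambda>Y. A ** Y = mat 1 \<and> Y ** A = mat 1"]) blast
  then have "matrix_inv A = matrix_inv A ** (A ** X)" and "matrix_inv A ** A = mat 1"
    using assms by simp_all
  then show ?thesis by (simp add: matrix_mul_assoc)
qed

lemma msqrt_eq_mexp:
  assumes "C \<in> spd"
  shows "msqrt C = mexp ((1/2) *\<^sub>R mlog C)"
  unfolding msqrt_def
proof (rule the_equality)
  have hs: "(1/2) *\<^sub>R mlog C \<in> sym_mats"
    using mlog_sym_mats[OF assms] by (simp add: sym_mats_def transpose_scalar)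
  show "mexp ((1/2) *\<^sub>R mlog C) \<in> spd \<and> mexp ((1/2) *\<^sub>R mlog C) ** mexp ((1/2) *\<^sub>R mlog C) = C"
    using mexp_sym_mats_spd[OF hs] mexp_scaleR_add[OF mlog_sym_mats[OF assms], of "1/2" "1/2"]
      mexp_mlog[OF assms] by simp
  fix S assume S: "S \<in> spd \<and> S ** S = C"
  have Ms: "mlog S \<in> sym_mats" and eS: "mexp (mlog S) = S" using mlog_sym_mats mexp_mlog S by auto
  have 2: "2 *\<^sub>R mlog S \<in> sym_mats" using Ms by (simp add: sym_mats_def transpose_scalar)
  have "mexp (2 *\<^sub>R mlog S) = C"
    using mexp_scaleR_add[OF Ms, of 1 1] eS S by simp
  then have "mlog C = 2 *\<^sub>R mlog S" using mlog_mexp[OF 2] by simp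
  then show "S = mexp ((1/2) *\<^sub>R mlog C)" using eS by simp
qed

text \<open>Since \<open>\<surd>C = exp(\<onehalf> log C)\<close>, the square root and its inverse are symmetric, mutually
  inverse, and depend continuously on \<open>C\<close>.\<close>
lemma matrix_inv_msqrt_eq_mexp:
  assumes "C \<in> spd"
  shows "matrix_inv (msqrt C) = mexp (- (1/2) *\<^sub>R mlog C)"
  using mexp_scaleR_inverse[OF mlog_sym_mats[OF assms], of "1/2"]
    mexp_scaleR_inverse[OF mlog_sym_mats[OF assms], of "- 1/2"]
  by (intro matrix_inv_eqI) (simp_all add: msqrt_eq_mexp[OF assms])

lemma spd_congruence:
  fixes S Q :: "real^'n^'n"
  assumes S: "transpose S = S" and S': "S' ** S = mat 1" and Q: "Q \<in> spd"
  shows "S ** Q ** S \<in> spd"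
proof -
  have "transpose (S ** Q ** S) = S ** Q ** S"
    using S spd_imp_symmetric[OF Q] by (simp add: matrix_transpose_mul matrix_mul_assoc)
  moreover have "x \<bullet> ((S ** Q ** S) *v x) > 0" if "x \<noteq> 0" for x
  proof -
    have "S' *v (S *v x) = x" using S' by (simp add: matrix_vector_mul_assoc)
    then have "S *v x \<noteq> 0" using that by auto
    then have "(S *v x) \<bullet> (Q *v (S *v x)) > 0" using Q by (simp add: spd_def)
    also have "(S *v x) \<bullet> (Q *v (S *v x)) = x \<bullet> (S *v (Q *v (S *v x)))"
      using symmetric_matrix_inner_commute[OF S] by simp
    finally show ?thesis by (simp add: matrix_vector_mul_assoc matrix_mul_assoc)
  qed
  ultimately show ?thesis by (simp add: spd_def)
qed

lemma sym_mats_congruence: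
  fixes S V :: "real^'n^'n"
  assumes "transpose S = S" "V \<in> sym_mats"
  shows "S ** V ** S \<in> sym_mats"
  using assms by (simp add: sym_mats_def matrix_transpose_mul matrix_mul_assoc)

section \<open>Continuity of the matrix exponential and logarithm\<close>

lemma matrix_mult_entry_bound:
  fixes A B :: "real^'n^'n"
  assumes "\<And>i j. \<bar>A$i$j\<bar> \<le> a" "\<And>i j. \<bar>B$i$j\<bar> \<le> b"
  shows "\<bar>(A ** B)$i$j\<bar> \<le> real CARD('n) * a * b"
proof -
  have "\<bar>(A ** B)$i$j\<bar> = \<bar>\<Sum>k\<in>UNIV. A$i$k * B$k$j\<bar>" by (simp add: matrix_matrix_mult_def)
  also have "\<dots> \<le> (\<Sum>k\<in>UNIV. \<bar>A$i$k\<bar> * \<bar>B$k$j\<bar>)"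
    by (rule order_trans[OF sum_abs]) (simp add: abs_mult)
  also have "\<dots> \<le> (\<Sum>k\<in>(UNIV::'n set). a * b)"
    using assms(1)[of i i] by (intro sum_mono mult_mono assms) (auto intro: order_trans[OF abs_ge_zero])
  finally show ?thesis by simp
qed

lemma mpow_entry_bound:
  fixes M :: "real^'n^'n"
  assumes "\<And>i j. \<bar>M$i$j\<bar> \<le> r" "r \<ge> 0"
  shows "\<bar>(mpow M k)$i$j\<bar> \<le> (real CARD('n) * r)^k"
proof (induction k arbitrary: i j)
  case 0 then show ?case by (simp add: mat_def)
next
  case (Suc k)
  have "\<bar>(M ** mpow M k)$i$j\<bar> \<le> real CARD('n) * r * (real CARD('n) * r)^k"
    by (rule matrix_mult_entry_bound[OF assms(1) Suc.IH])
  then show ?case by (simp add: algebra_simps)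
qed

lemma norm_le_entry_bound:
  fixes X :: "real^'n^'n"
  assumes "\<And>i j. \<bar>X$i$j\<bar> \<le> c"
  shows "norm X \<le> real CARD('n) * real CARD('n) * c"
proof -
  have "norm X \<le> (\<Sum>i\<in>UNIV. norm (X$i))"
    unfolding norm_vec_def by (rule L2_set_le_sum) auto
  also have "\<dots> \<le> (\<Sum>i\<in>(UNIV::'n set). \<Sum>j\<in>(UNIV::'n set). \<bar>X$i$j\<bar>)"
    by (intro sum_mono norm_le_l1_cart)
  also have "\<dots> \<le> (\<Sum>i\<in>(UNIV::'n set). \<Sum>j\<in>(UNIV::'n set). c)"
    by (intro sum_mono assms)
  finally show ?thesis by simp
qed

lemma entry_le_norm: "\<bar>(M::real^'n^'n)$i$j\<bar> \<le> norm M"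
  using component_le_norm_cart[of "M$i" j] Finite_Cartesian_Product.norm_nth_le[of M i] by linarith

lemma continuous_on_mpow: "continuous_on S (\<lambda>M::real^'n^'n. mpow M k)"
  by (induction k) (auto intro!: continuous_intros)

text \<open>On a ball the exponential series is dominated entrywise by a scalar exponential series, so
  it converges uniformly there (Weierstrass M-test).\<close>
lemma continuous_on_mexp_ball: "continuous_on (ball 0 r) (mexp :: real^'n^'n \<Rightarrow> _)"
proof (cases "r > 0")
  case False then show ?thesis by (simp add: ball_empty)
next
  case True
  let ?n = "real CARD('n)"
  define Mb where "Mb = (\<lambda>k::nat. ?n * ?n * ((?n * r)^k / fact k))"
  have "summable Mb"
    unfolding Mb_def using exp_converges[of "?n * r"]
    by (intro summable_mult) (simp add: sums_iff divide_inverse mult.commute)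
  moreover have "norm ((1 / fact k) *\<^sub>R mpow M k) \<le> Mb k" if "M \<in> ball (0::real^'n^'n) r" for k M
  proof -
    have h: "\<bar>M$i$j\<bar> \<le> r" for i j using entry_le_norm[of M i j] that by simp
    have "\<bar>(mpow M k)$i$j\<bar> \<le> (?n * r)^k" for i j using mpow_entry_bound[OF h] True by simp
    then have "\<bar>((1 / fact k) *\<^sub>R mpow M k)$i$j\<bar> \<le> (?n * r)^k / fact k" for i j
      by (simp add: divide_right_mono)
    then show ?thesis unfolding Mb_def by (rule norm_le_entry_bound)
  qed
  ultimately have "uniform_limit (ball (0::real^'n^'n) r) (\<lambda>n M. \<Sum>k<n. (1 / fact k) *\<^sub>R mpow M k)
        (\<lambda>M. \<Sum>k. (1 / fact k) *\<^sub>R mpow M k) sequentially"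
    by (intro Weierstrass_m_test[where M=Mb]) auto
  then show ?thesis
    unfolding mexp_def[abs_def]
    by (rule uniform_limit_theorem[rotated])
      (auto intro!: always_eventually continuous_intros continuous_on_mpow)
qed

lemma continuous_on_mexp: "continuous_on S (mexp :: real^'n^'n \<Rightarrow> _)"
proof -
  have "isCont mexp M" for M :: "real^'n^'n"
    using continuous_on_mexp_ball[of "norm M + 1"]
    by (meson continuous_on_eq_continuous_at open_ball centre_in_ball mem_ball_0 less_add_one)
  then show ?thesis by (simp add: continuous_at_imp_continuous_on)
qed

lemma mexp_sym_mats_image: "mexp ` sym_mats = (spd :: (real^'n^'n) set)"
proof
  show "mexp ` sym_mats \<subseteq> (spd :: (real^'n^'n) set)" using mexp_sym_mats_spd by auto
  show "(spd :: (real^'n^'n) set) \<subseteq> mexp ` sym_mats"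
    using mexp_mlog mlog_sym_mats by (metis image_eqI subsetI)
qed

text \<open>By invariance of domain the continuous injection \<open>exp\<close> of the space of symmetric
  matrices into itself is an open map, so its inverse \<open>log\<close> is continuous.\<close>
lemma continuous_on_mlog: "continuous_on (spd :: (real^'n^'n) set) mlog"
proof (rule continuous_on_inverse_open_map[OF continuous_on_mexp mexp_sym_mats_image])
  show "\<And>x. x \<in> sym_mats \<Longrightarrow> mlog (mexp x) = x" by (rule mlog_mexp)
  fix U :: "(real^'n^'n) set"
  assume U: "openin (top_of_set sym_mats) U"
  then have Usub: "U \<subseteq> sym_mats" by (rule openin_imp_subset)
  have "openin (top_of_set sym_mats) (mexp ` U)"
  proof (rule invariance_of_domain_subspaces[OF U subspace_sym_mats subspace_sym_mats order_refl
        continuous_on_mexp])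
    show "mexp \<in> U \<rightarrow> sym_mats" using Usub mexp_sym_mats_spd spd_subset_sym_mats by auto
    show "inj_on mexp U" using Usub inj_on_mexp_sym_mats by (rule inj_on_subset[rotated])
  qed
  moreover have "mexp ` U \<subseteq> spd" using Usub mexp_sym_mats_spd by auto
  ultimately show "openin (top_of_set spd) (mexp ` U)"
    using spd_subset_sym_mats by (rule openin_subset_trans)
qed

lemma homeomorphism_mlog: "homeomorphism spd sym_mats mlog mexp"
  by (rule homeomorphismI)
    (auto simp: continuous_on_mlog continuous_on_mexp mlog_sym_mats mexp_sym_mats_spd mexp_mlog mlog_mexp)

section \<open>The Riemannian logarithm as a global chart\<close>

lemma homeomorphism_congruence:
  fixes S S' :: "real^'n^'n"
  assumes inv: "S ** S' = mat 1" "S' ** S = mat 1"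
    and T: "\<And>C. C \<in> T \<Longrightarrow> S ** C ** S \<in> T" "\<And>C. C \<in> T \<Longrightarrow> S' ** C ** S' \<in> T"
  shows "homeomorphism T T (\<lambda>C. S ** C ** S) (\<lambda>C. S' ** C ** S')"
proof (rule homeomorphismI)
  have cancel: "X ** (Y ** C ** Y) ** X = C" if "X ** Y = mat 1" "Y ** X = mat 1" for X Y C :: "real^'n^'n"
  proof -
    have "X ** (Y ** C ** Y) ** X = (X ** Y) ** C ** (Y ** X)" by (simp add: matrix_mul_assoc)
    then show ?thesis using that by simp
  qed
  show "S' ** (S ** C ** S) ** S' = C" for C using cancel inv by blast
  show "S ** (S' ** C ** S') ** S = C" for C using cancel inv by blast
  show "(\<lambda>C. S ** C ** S) ` T \<subseteq> T" "(\<lambda>C. S' ** C ** S') ` T \<subseteq> T" using T by auto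
qed (intro continuous_intros)+


lemma
  assumes "A \<in> spd"
  shows msqrt_mult_matrix_inv: "msqrt A ** matrix_inv (msqrt A) = mat 1"
    and matrix_inv_mult_msqrt: "matrix_inv (msqrt A) ** msqrt A = mat 1"
    and symmetric_msqrt: "transpose (msqrt A) = msqrt A"
    and symmetric_matrix_inv_msqrt: "transpose (matrix_inv (msqrt A)) = matrix_inv (msqrt A)"
proof -
  have L: "a *\<^sub>R mlog A \<in> sym_mats" for a
    using mlog_sym_mats[OF assms] by (simp add: sym_mats_def transpose_scalar)
  show "msqrt A ** matrix_inv (msqrt A) = mat 1"
    using mexp_scaleR_inverse[OF mlog_sym_mats[OF assms], of "1/2"]
    unfolding matrix_inv_msqrt_eq_mexp[OF assms] by (simp add: msqrt_eq_mexp[OF assms])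
  show "matrix_inv (msqrt A) ** msqrt A = mat 1"
    using mexp_scaleR_inverse[OF mlog_sym_mats[OF assms], of "- (1/2)"]
    unfolding matrix_inv_msqrt_eq_mexp[OF assms] by (simp add: msqrt_eq_mexp[OF assms])
  show "transpose (msqrt A) = msqrt A"
    using spd_imp_symmetric[OF mexp_sym_mats_spd[OF L]] by (simp add: msqrt_eq_mexp[OF assms])
  show "transpose (matrix_inv (msqrt A)) = matrix_inv (msqrt A)"
    using spd_imp_symmetric[OF mexp_sym_mats_spd[OF L[of "- (1/2)"]]]
    by (simp add: matrix_inv_msqrt_eq_mexp[OF assms])
qed

lemma homeomorphism_msqrt_congruence:
  assumes A: "A \<in> spd" and T: "T = spd \<or> T = sym_mats"
  shows "homeomorphism T T (\<lambda>C. msqrt A ** C ** msqrt A)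
           (\<lambda>C. matrix_inv (msqrt A) ** C ** matrix_inv (msqrt A))"
proof (rule homeomorphism_congruence[OF msqrt_mult_matrix_inv[OF A] matrix_inv_mult_msqrt[OF A]])
  show "msqrt A ** C ** msqrt A \<in> T" if "C \<in> T" for C
    using T that spd_congruence[OF symmetric_msqrt[OF A] matrix_inv_mult_msqrt[OF A]]
      sym_mats_congruence[OF symmetric_msqrt[OF A]] by blast
  show "matrix_inv (msqrt A) ** C ** matrix_inv (msqrt A) \<in> T" if "C \<in> T" for C
    using T that spd_congruence[OF symmetric_matrix_inv_msqrt[OF A] msqrt_mult_matrix_inv[OF A]]
      sym_mats_congruence[OF symmetric_matrix_inv_msqrt[OF A]] by blast
qed


text \<open>\<open>Log\<^sub>A\<close> is \<open>log\<close> conjugated by the congruence \<open>C \<mapsto> \<surd>A C \<surd>A\<close>.\<close>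
theorem homeomorphism_RLog:
  assumes A: "A \<in> spd"
  shows "homeomorphism spd sym_mats (RLog A) (RExp A)"
proof -
  let ?S = "msqrt A" and ?S' = "matrix_inv (msqrt A)"
  have "homeomorphism spd sym_mats (mlog \<circ> (\<lambda>C. ?S' ** C ** ?S')) ((\<lambda>C. ?S ** C ** ?S) \<circ> mexp)"
    by (rule homeomorphism_compose[OF homeomorphism_symD homeomorphism_mlog])
      (rule homeomorphism_msqrt_congruence[OF A disjI1[OF refl]])
  from homeomorphism_compose[OF this homeomorphism_msqrt_congruence[OF A disjI2[OF refl]]]
  have "homeomorphism spd sym_mats
      ((\<lambda>V. ?S ** V ** ?S) \<circ> (mlog \<circ> (\<lambda>C. ?S' ** C ** ?S')))
      (((\<lambda>C. ?S ** C ** ?S) \<circ> mexp) \<circ> (\<lambda>V. ?S' ** V ** ?S'))" .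
  moreover have "RLog A = (\<lambda>V. ?S ** V ** ?S) \<circ> (mlog \<circ> (\<lambda>C. ?S' ** C ** ?S'))"
    by (simp add: fun_eq_iff RLog_def)
  moreover have "RExp A = ((\<lambda>C. ?S ** C ** ?S) \<circ> mexp) \<circ> (\<lambda>V. ?S' ** V ** ?S')"
    by (simp add: fun_eq_iff RExp_def)
  ultimately show ?thesis by simp
qed

lemma continuous_on_matrix_inv_msqrt: "continuous_on spd (\<lambda>A::real^'n^'n. matrix_inv (msqrt A))"
proof (rule continuous_on_eq)
  show "continuous_on spd (\<lambda>A::real^'n^'n. mexp (- (1/2) *\<^sub>R mlog A))"
    by (intro continuous_on_compose2[OF continuous_on_mexp] continuous_intros continuous_on_mlog) auto
qed (simp add: matrix_inv_msqrt_eq_mexp)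

lemma whitened_spd:
  "A \<in> spd \<Longrightarrow> C \<in> spd \<Longrightarrow> matrix_inv (msqrt A) ** C ** matrix_inv (msqrt A) \<in> spd"
  by (rule spd_congruence[OF symmetric_matrix_inv_msqrt msqrt_mult_matrix_inv])

lemma continuous_on_ai_dist: "continuous_on (spd \<times> spd) (case_prod ai_dist)"
proof -
  let ?W = "\<lambda>p. matrix_inv (msqrt (fst p)) ** snd p ** matrix_inv (msqrt (fst p))"
  have "continuous_on (spd \<times> spd) (\<lambda>p. matrix_inv (msqrt (fst p)))"
    by (rule continuous_on_compose2[OF continuous_on_matrix_inv_msqrt continuous_on_fst]) auto
  then have "continuous_on (spd \<times> spd) ?W"
    by (intro continuous_intros)
  moreover have "?W ` (spd \<times> spd) \<subseteq> spd" using whitened_spd by auto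
  ultimately have "continuous_on (spd \<times> spd) (\<lambda>p. mlog (?W p))"
    by (rule continuous_on_compose2[OF continuous_on_mlog])
  then have "continuous_on (spd \<times> spd) (\<lambda>p. norm (mlog (?W p)))"
    by (rule continuous_on_norm)
  then show ?thesis by (simp add: ai_dist_def case_prod_beta)
qed

lemma ai_dist_self:
  assumes "P \<in> spd"
  shows "ai_dist P P = 0"
proof -
  let ?S = "msqrt P" and ?S' = "matrix_inv (msqrt P)"
  have sq: "?S ** ?S = P" using msqrt_eq_mexp[OF assms] mexp_scaleR_add[OF mlog_sym_mats[OF assms], of "1/2" "1/2"]
    by (simp add: mexp_mlog[OF assms])
  have "?S' ** P ** ?S' = ?S' ** (?S ** ?S) ** ?S'" by (simp only: sq)
  also have "\<dots> = (?S' ** ?S) ** (?S ** ?S')" by (simp add: matrix_mul_assoc)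
  also have "\<dots> = mexp 0"
    by (simp add: mexp_zero msqrt_mult_matrix_inv[OF assms] matrix_inv_mult_msqrt[OF assms])
  finally show ?thesis by (simp add: ai_dist_def mlog_mexp sym_mats_def transpose_zero)
qed

section \<open>Transferring density through global charts\<close>

lemma homeomorphism_inv_linear:
  fixes f :: "'a::euclidean_space \<Rightarrow> 'b::euclidean_space"
  assumes "linear f" "inj f"
  shows "homeomorphism (range f) UNIV (inv f) f"
proof -
  obtain g where g: "homeomorphism (range f) UNIV g f"
    using linear_homeomorphism_image[OF assms] by blast
  show ?thesis
  proof (rule homeomorphism_cong[OF g])
    show "inv f y = g y" if "y \<in> range f" for y
      using that g assms(2) by (auto simp: homeomorphism_def)
  qed auto
qed

corollary homeomorphism_spd_chart:
  fixes \<kappa> :: "'a::euclidean_space \<Rightarrow> real^'n^'n"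
  assumes "A \<in> spd" "linear \<kappa>" "inj \<kappa>" "range \<kappa> = sym_mats"
  shows "homeomorphism spd UNIV (inv \<kappa> \<circ> RLog A) (RExp A \<circ> \<kappa>)"
proof -
  have "homeomorphism sym_mats UNIV (inv \<kappa>) \<kappa>"
    using homeomorphism_inv_linear[OF assms(2,3)] assms(4) by simp
  from homeomorphism_compose[OF homeomorphism_RLog[OF assms(1)] this] show ?thesis .
qed

lemma uniformly_small_near_diagonal:
  fixes G :: "'a::euclidean_space \<times> 'a \<Rightarrow> real"
  assumes cG: "continuous_on UNIV G" and G0: "\<And>u. u \<in> C \<Longrightarrow> G (u, u) = 0"
    and C: "compact C" and e: "e > 0"
  obtains d where "d > 0" "\<And>u v. u \<in> C \<Longrightarrow> dist v u < d \<Longrightarrow> G (u, v) < e"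
proof -
  define T where "T = (\<lambda>p. (fst p, fst p + snd p)) ` (C \<times> cball (0::'a) 1)"
  have "compact T" unfolding T_def
    by (intro compact_continuous_image compact_Times C compact_cball) (intro continuous_intros)
  then have "uniformly_continuous_on T G"
    using cG by (intro compact_uniformly_continuous) (auto intro: continuous_on_subset)
  then obtain d0 where d0: "d0 > 0"
    "\<And>x x'. x \<in> T \<Longrightarrow> x' \<in> T \<Longrightarrow> dist x' x < d0 \<Longrightarrow> dist (G x') (G x) < e"
    unfolding uniformly_continuous_on_def using e by metis
  show ?thesis
  proof (rule that[of "min d0 1"])
    show "min d0 1 > 0" using d0 by simp
    fix u v assume u: "u \<in> C" and dv: "dist v u < min d0 1"
    have p: "(u, u) \<in> T" unfolding T_def using u by (auto intro!: image_eqI[of _ _ "(u, 0)"])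
    have q: "(u, v) \<in> T" unfolding T_def using u dv
      by (auto intro!: image_eqI[of _ _ "(u, v - u)"] simp: dist_norm norm_minus_commute)
    have "dist (u, v) (u, u) < d0" using dv by (simp add: dist_Pair_Pair)
    then have "dist (G (u, v)) (G (u, u)) < e" using d0(2)[OF p q] by simp
    then show "G (u, v) < e" using G0[OF u] by (simp add: dist_real_def)
  qed
qed

text \<open>If \<open>\<phi>\<close> and \<open>\<psi>\<close> are global charts of \<open>X\<close> and \<open>Y\<close>, density in \<open>C(\<real>\<^sup>k, \<real>\<^sup>l)\<close>
  transfers to \<open>C(X, Y)\<close> for any continuous \<open>\<delta>\<close> vanishing on the diagonal: approximate
  \<open>\<psi> \<circ> g \<circ> \<phi>\<inverse>\<close> on the compact set \<open>\<phi> K\<close>, closely enough for uniform continuity of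
  \<open>\<delta>\<close> near the diagonal over the compact set \<open>\<psi>(g K)\<close>.\<close>
theorem ucc_dense_chart_transfer:
  fixes \<phi> :: "'a::topological_space \<Rightarrow> 'c::euclidean_space"
    and \<psi> :: "'b::topological_space \<Rightarrow> 'd::euclidean_space"
    and F :: "('c \<Rightarrow> 'd) set"
  assumes \<phi>: "homeomorphism X UNIV \<phi> \<phi>'" and \<psi>: "homeomorphism Y UNIV \<psi> \<psi>'"
    and \<delta>: "continuous_on (Y \<times> Y) (case_prod \<delta>)" "\<And>y. y \<in> Y \<Longrightarrow> \<delta> y y = 0"
    and F: "ucc_dense UNIV UNIV dist F"
  shows "ucc_dense X Y \<delta> ((\<lambda>f. \<psi>' \<circ> f \<circ> \<phi>) ` F)"
  unfolding ucc_dense_def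
proof (intro allI impI, elim conjE)
  fix g K and e :: real
  assume g: "continuous_on X g" "g ` X \<subseteq> Y" and K: "compact K" "K \<subseteq> X" and e: "e > 0"
  have \<phi>'X: "\<phi>' z \<in> X" for z using homeomorphism_image2[OF \<phi>] by blast
  have \<psi>'Y: "\<psi>' w \<in> Y" for w using homeomorphism_image2[OF \<psi>] by blast
  define h where "h = (\<lambda>z. \<psi> (g (\<phi>' z)))"
  have "continuous_on UNIV (\<lambda>z. g (\<phi>' z))"
    by (rule continuous_on_compose2[OF g(1) homeomorphism_cont2[OF \<phi>]]) (use \<phi>'X in auto)
  then have h_cont: "continuous_on UNIV h" unfolding h_def
    by (rule continuous_on_compose2[OF homeomorphism_cont1[OF \<psi>]]) (use \<phi>'X g(2) in auto)
  define G where "G = (\<lambda>p. \<delta> (\<psi>' (snd p)) (\<psi>' (fst p)))"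
  have "continuous_on UNIV (\<lambda>p::'d \<times> 'd. (\<psi>' (snd p), \<psi>' (fst p)))"
    by (intro continuous_intros continuous_on_compose2[OF homeomorphism_cont2[OF \<psi>]]) auto
  then have G_cont: "continuous_on UNIV G" unfolding G_def
    by (rule continuous_on_compose2[OF \<delta>(1), where f = "\<lambda>p. (\<psi>' (snd p), \<psi>' (fst p))", simplified])
      (use \<psi>'Y in auto)
  have G_diag: "G (u, u) = 0" for u by (simp add: G_def \<delta>(2) \<psi>'Y)
  have "continuous_on K (\<lambda>x. \<psi> (g x))"
    by (rule continuous_on_compose2[OF homeomorphism_cont1[OF \<psi>] continuous_on_subset[OF g(1) K(2)]])
      (use K(2) g(2) in auto)
  then have "compact ((\<lambda>x. \<psi> (g x)) ` K)" using K(1) by (rule compact_continuous_image)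
  from uniformly_small_near_diagonal[OF G_cont G_diag this e]
  obtain d where d: "d > 0" "\<And>u v. u \<in> (\<lambda>x. \<psi> (g x)) ` K \<Longrightarrow> dist v u < d \<Longrightarrow> G (u, v) < e"
    by blast
  have "compact (\<phi> ` K)"
    using K by (intro compact_continuous_image continuous_on_subset[OF homeomorphism_cont1[OF \<phi>]])
  then obtain f where f: "f \<in> F" "\<And>z. z \<in> \<phi> ` K \<Longrightarrow> dist (f z) (h z) < d"
    using F[unfolded ucc_dense_def, rule_format, of h "\<phi> ` K" d] h_cont d(1) by auto
  show "\<exists>f'\<in>(\<lambda>f. \<psi>' \<circ> f \<circ> \<phi>) ` F. \<forall>x\<in>K. \<delta> (f' x) (g x) < e"
  proof (intro bexI[of _ "\<psi>' \<circ> f \<circ> \<phi>"] ballI)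
    fix x assume x: "x \<in> K"
    then have "h (\<phi> x) = \<psi> (g x)" "\<psi>' (\<psi> (g x)) = g x"
      using K(2) g(2) homeomorphism_apply1[OF \<phi>] homeomorphism_apply1[OF \<psi>] by (auto simp: h_def)
    then show "\<delta> ((\<psi>' \<circ> f \<circ> \<phi>) x) (g x) < e"
      using d(2)[of "\<psi> (g x)" "f (\<phi> x)"] f(2)[of "\<phi> x"] x by (simp add: G_def)
  qed (use f in blast)
qed

definition ucc_closure :: "('a::topological_space \<Rightarrow> real) set \<Rightarrow> ('a \<Rightarrow> real) set" where
  "ucc_closure N = {f. \<forall>K e. compact K \<and> e > 0 \<longrightarrow> (\<exists>g\<in>N. \<forall>x\<in>K. \<bar>f x - g x\<bar> < e)}"

lemma ucc_closureI:
  "(\<And>K e. compact K \<Longrightarrow> e > 0 \<Longrightarrow> \<exists>g\<in>N. \<forall>x\<in>K. \<bar>f x - g x\<bar> < e) \<Longrightarrow> f \<in> ucc_closure N"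
  by (simp add: ucc_closure_def)

lemma ucc_closureD:
  "f \<in> ucc_closure N \<Longrightarrow> compact K \<Longrightarrow> e > 0 \<Longrightarrow> \<exists>g\<in>N. \<forall>x\<in>K. \<bar>f x - g x\<bar> < e"
  by (simp add: ucc_closure_def)

lemma ucc_closure_real_intervalI:
  fixes f :: "real \<Rightarrow> real"
  assumes "\<And>R e. e > 0 \<Longrightarrow> \<exists>g\<in>N. \<forall>t\<in>{-R..R}. \<bar>f t - g t\<bar> < e"
  shows "f \<in> ucc_closure N"
proof (rule ucc_closureI)
  fix K :: "real set" and e :: real
  assume "compact K" "e > 0"
  obtain R where R: "\<And>x. x \<in> K \<Longrightarrow> \<bar>x\<bar> \<le> R"
    using compact_imp_bounded[OF \<open>compact K\<close>] by (auto simp: bounded_iff)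
  obtain g where "g \<in> N" "\<forall>t\<in>{-R..R}. \<bar>f t - g t\<bar> < e" using assms[OF \<open>e > 0\<close>] by blast
  moreover have "K \<subseteq> {-R..R}"
  proof
    fix x assume "x \<in> K"
    then have "\<bar>x\<bar> \<le> R" by (rule R)
    then show "x \<in> {-R..R}" by (auto simp: abs_le_iff)
  qed
  ultimately show "\<exists>g\<in>N. \<forall>x\<in>K. \<bar>f x - g x\<bar> < e" by blast
qed

lemma subset_ucc_closure: "N \<subseteq> ucc_closure N"
proof
  fix f assume "f \<in> N"
  then show "f \<in> ucc_closure N" by (intro ucc_closureI bexI[of _ f]) auto
qed

lemma ucc_closure_ucc_closure:
  fixes N :: "('a::topological_space \<Rightarrow> real) set"
  shows "ucc_closure (ucc_closure N) = ucc_closure N"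
proof
  show "ucc_closure (ucc_closure N) \<subseteq> ucc_closure N"
  proof (intro subsetI ucc_closureI)
    fix f and K :: "'a set" and e :: real
    assume f: "f \<in> ucc_closure (ucc_closure N)" and K: "compact K" and e: "e > 0"
    obtain g where g: "g \<in> ucc_closure N" "\<forall>x\<in>K. \<bar>f x - g x\<bar> < e/2"
      using ucc_closureD[OF f K, of "e/2"] e by auto
    obtain g' where g': "g' \<in> N" "\<forall>x\<in>K. \<bar>g x - g' x\<bar> < e/2"
      using ucc_closureD[OF g(1) K, of "e/2"] e by auto
    have "\<bar>f x - g' x\<bar> < e" if "x \<in> K" for x
    proof -
      have "\<bar>f x - g x\<bar> < e/2" "\<bar>g x - g' x\<bar> < e/2" using g(2) g'(2) that by auto
      moreover have "\<bar>f x - g' x\<bar> \<le> \<bar>f x - g x\<bar> + \<bar>g x - g' x\<bar>"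
        by (rule order_trans[OF _ abs_triangle_ineq]) simp
      ultimately show ?thesis by linarith
    qed
    with g'(1) show "\<exists>g\<in>N. \<forall>x\<in>K. \<bar>f x - g x\<bar> < e" by blast
  qed
qed (rule subset_ucc_closure)

lemma ucc_closure_approxI:
  assumes "\<And>K e. compact K \<Longrightarrow> e > 0 \<Longrightarrow> \<exists>g\<in>ucc_closure N. \<forall>x\<in>K. \<bar>f x - g x\<bar> < e"
  shows "f \<in> ucc_closure N"
  using ucc_closureI[OF assms] ucc_closure_ucc_closure by blast

lemma ucc_closure_add:
  fixes N :: "('a::topological_space \<Rightarrow> real) set"
  assumes N: "\<And>g h. g \<in> N \<Longrightarrow> h \<in> N \<Longrightarrow> (\<lambda>x. g x + h x) \<in> N"
    and f: "f \<in> ucc_closure N" "f' \<in> ucc_closure N"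
  shows "(\<lambda>x. f x + f' x) \<in> ucc_closure N"
proof (rule ucc_closureI)
  fix K :: "'a set" and e :: real
  assume K: "compact K" and e: "e > 0"
  obtain g where g: "g \<in> N" "\<forall>x\<in>K. \<bar>f x - g x\<bar> < e/2"
    using ucc_closureD[OF f(1) K, of "e/2"] e by auto
  obtain g' where g': "g' \<in> N" "\<forall>x\<in>K. \<bar>f' x - g' x\<bar> < e/2"
    using ucc_closureD[OF f(2) K, of "e/2"] e by auto
  have "\<bar>f x + f' x - (g x + g' x)\<bar> < e" if "x \<in> K" for x
  proof -
    have "\<bar>f x - g x\<bar> < e/2" "\<bar>f' x - g' x\<bar> < e/2" using g(2) g'(2) that by auto
    moreover have "\<bar>f x + f' x - (g x + g' x)\<bar> \<le> \<bar>f x - g x\<bar> + \<bar>f' x - g' x\<bar>"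
      by (rule order_trans[OF _ abs_triangle_ineq]) simp
    ultimately show ?thesis by linarith
  qed
  then show "\<exists>h\<in>N. \<forall>x\<in>K. \<bar>f x + f' x - h x\<bar> < e"
    using N[OF g(1) g'(1)] by (intro bexI[of _ "\<lambda>x. g x + g' x"]) auto
qed

lemma ucc_closure_scale:
  fixes N :: "('a::topological_space \<Rightarrow> real) set"
  assumes N: "\<And>g. g \<in> N \<Longrightarrow> (\<lambda>x. k * g x) \<in> N" and f: "f \<in> ucc_closure N"
  shows "(\<lambda>x. k * f x) \<in> ucc_closure N"
proof (rule ucc_closureI)
  fix K :: "'a set" and e :: real
  assume K: "compact K" and e: "e > 0"
  obtain g where g: "g \<in> N" "\<forall>x\<in>K. \<bar>f x - g x\<bar> < e / (\<bar>k\<bar> + 1)"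
    using ucc_closureD[OF f K, of "e / (\<bar>k\<bar> + 1)"] e by auto
  have "\<bar>k * f x - k * g x\<bar> < e" if "x \<in> K" for x
  proof -
    have "\<bar>k * f x - k * g x\<bar> = \<bar>k\<bar> * \<bar>f x - g x\<bar>" by (simp add: abs_mult[symmetric] algebra_simps)
    also have "\<dots> \<le> (\<bar>k\<bar> + 1) * \<bar>f x - g x\<bar>" by (simp add: mult_right_mono)
    also have "\<dots> < (\<bar>k\<bar> + 1) * (e / (\<bar>k\<bar> + 1))"
      using g(2) that by (intro mult_strict_left_mono) auto
    also have "\<dots> = e" by simp
    finally show ?thesis .
  qed
  then show "\<exists>h\<in>N. \<forall>x\<in>K. \<bar>k * f x - h x\<bar> < e"
    using N[OF g(1)] by (intro bexI[of _ "\<lambda>x. k * g x"]) auto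
qed

lemma ucc_closure_compose:
  fixes T :: "'b::topological_space \<Rightarrow> 'a::t2_space"
  assumes T: "continuous_on UNIV T" and NM: "\<And>g. g \<in> N \<Longrightarrow> g \<circ> T \<in> M"
    and f: "f \<in> ucc_closure N"
  shows "f \<circ> T \<in> ucc_closure M"
proof (rule ucc_closureI)
  fix K :: "'b set" and e :: real
  assume K: "compact K" and e: "e > 0"
  have "compact (T ` K)" using K by (intro compact_continuous_image continuous_on_subset[OF T]) auto
  then obtain g where "g \<in> N" "\<forall>y\<in>T ` K. \<bar>f y - g y\<bar> < e"
    using ucc_closureD[OF f _ e] by blast
  then show "\<exists>h\<in>M. \<forall>x\<in>K. \<bar>(f \<circ> T) x - h x\<bar> < e"
    using NM by (intro bexI[of _ "g \<circ> T"]) auto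
qed

section \<open>Shallow networks\<close>

definition shallow_net :: "(real \<Rightarrow> real) \<Rightarrow> (real \<times> 'a \<times> real) list \<Rightarrow> 'a::real_inner \<Rightarrow> real" where
  "shallow_net \<sigma> ps x = (\<Sum>(c, a, b)\<leftarrow>ps. c * \<sigma> (a \<bullet> x + b))"

definition shallow_nets :: "(real \<Rightarrow> real) \<Rightarrow> ('a::real_inner \<Rightarrow> real) set" where
  "shallow_nets \<sigma> = range (shallow_net \<sigma>)"

lemma shallow_net_append: "shallow_net \<sigma> (ps @ qs) x = shallow_net \<sigma> ps x + shallow_net \<sigma> qs x"
  by (simp add: shallow_net_def)

lemma shallow_net_scale:
  "shallow_net \<sigma> (map (\<lambda>(c, a, b). (k * c, a, b)) ps) x = k * shallow_net \<sigma> ps x"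
  by (induction ps) (auto simp: shallow_net_def algebra_simps)

lemma shallow_net_ridge:
  "shallow_net \<sigma> (map (\<lambda>(c, w, b'). (c, w *\<^sub>R a, w * b + b')) ps) x = shallow_net \<sigma> ps (a \<bullet> x + b)"
  by (induction ps) (auto simp: shallow_net_def algebra_simps)

lemma shallow_nets_add:
  "g \<in> shallow_nets \<sigma> \<Longrightarrow> h \<in> shallow_nets \<sigma> \<Longrightarrow> (\<lambda>x. g x + h x) \<in> shallow_nets \<sigma>"
  unfolding shallow_nets_def by (auto simp: shallow_net_append[symmetric])

lemma shallow_nets_scale: "g \<in> shallow_nets \<sigma> \<Longrightarrow> (\<lambda>x. k * g x) \<in> shallow_nets \<sigma>"
  unfolding shallow_nets_def by (auto simp: shallow_net_scale[symmetric])

lemma shallow_nets_zero: "(\<lambda>x. 0) \<in> shallow_nets \<sigma>"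
  unfolding shallow_nets_def by (auto intro!: range_eqI[of _ _ "[]"] simp: shallow_net_def)

lemma activation_in_shallow_nets: "\<sigma> \<in> shallow_nets \<sigma>"
  unfolding shallow_nets_def by (auto intro!: range_eqI[of _ _ "[(1, 1, 0)]"] simp: shallow_net_def)

abbreviation shallow_closure :: "(real \<Rightarrow> real) \<Rightarrow> ('a::real_inner \<Rightarrow> real) set" where
  "shallow_closure \<sigma> \<equiv> ucc_closure (shallow_nets \<sigma>)"

lemma shallow_closure_add:
  "f \<in> shallow_closure \<sigma> \<Longrightarrow> g \<in> shallow_closure \<sigma> \<Longrightarrow> (\<lambda>x. f x + g x) \<in> shallow_closure \<sigma>"
  by (rule ucc_closure_add[OF shallow_nets_add])

lemma shallow_closure_scale: "f \<in> shallow_closure \<sigma> \<Longrightarrow> (\<lambda>x. k * f x) \<in> shallow_closure \<sigma>"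
  by (rule ucc_closure_scale[OF shallow_nets_scale])

lemma shallow_closure_diff:
  "f \<in> shallow_closure \<sigma> \<Longrightarrow> g \<in> shallow_closure \<sigma> \<Longrightarrow> (\<lambda>x. f x - g x) \<in> shallow_closure \<sigma>"
  using shallow_closure_add[of f \<sigma> "\<lambda>x. - 1 * g x"] shallow_closure_scale[of g \<sigma> "- 1"] by simp

lemma shallow_closure_sum:
  "(\<And>i. i \<in> I \<Longrightarrow> f i \<in> shallow_closure \<sigma>) \<Longrightarrow> (\<lambda>x. \<Sum>i\<in>I. f i x) \<in> shallow_closure \<sigma>"
proof (induction I rule: infinite_finite_induct)
  case (insert i I)
  then show ?case by (simp add: shallow_closure_add)
qed (auto intro: subset_ucc_closure[THEN subsetD] shallow_nets_zero)

lemma shallow_closure_ridge: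
  fixes f :: "real \<Rightarrow> real" and a :: "'a::real_inner"
  assumes "f \<in> shallow_closure \<sigma>"
  shows "(\<lambda>x. f (a \<bullet> x + b)) \<in> (shallow_closure \<sigma> :: ('a \<Rightarrow> real) set)"
proof -
  have "g \<circ> (\<lambda>x. a \<bullet> x + b) \<in> (shallow_nets \<sigma> :: ('a \<Rightarrow> real) set)" if "g \<in> shallow_nets \<sigma>" for g
    using that unfolding shallow_nets_def comp_def by (auto simp: shallow_net_ridge[symmetric])
  from ucc_closure_compose[OF _ this assms] show ?thesis
    by (simp add: comp_def continuous_intros)
qed

lemma shallow_closure_affine:
  "f \<in> shallow_closure \<sigma> \<Longrightarrow> (\<lambda>t. f (w * t + b)) \<in> (shallow_closure \<sigma> :: (real \<Rightarrow> real) set)"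
  using shallow_closure_ridge[of f \<sigma> w b] by simp

lemma shallow_closure_real_intervalI:
  fixes f :: "real \<Rightarrow> real"
  assumes "\<And>R e. e > 0 \<Longrightarrow> \<exists>g\<in>shallow_closure \<sigma>. \<forall>t\<in>{-R..R}. \<bar>f t - g t\<bar> < e"
  shows "f \<in> shallow_closure \<sigma>"
  using ucc_closure_real_intervalI[OF assms] ucc_closure_ucc_closure by blast

section \<open>Moving averages and difference quotients\<close>

definition antideriv :: "(real \<Rightarrow> real) \<Rightarrow> real \<Rightarrow> real" where
  "antideriv g x = (LBINT t=(0::real)..x. g t)"

lemma has_real_derivative_antideriv:
  assumes "continuous_on UNIV g"
  shows "(antideriv g has_real_derivative g x) (at x)"
proof -
  have "((\<lambda>u. LBINT t=(0::real)..u. g t) has_vector_derivative g x) (at x within {- \<bar>x\<bar> - 1..\<bar>x\<bar> + 1})"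
    by (rule interval_integral_FTC2) (auto intro: continuous_on_subset[OF assms])
  moreover have "at x within {- \<bar>x\<bar> - 1..\<bar>x\<bar> + 1} = at x"
    by (rule at_within_Icc_at) auto
  ultimately show ?thesis
    by (simp add: antideriv_def[abs_def] has_real_derivative_iff_has_vector_derivative)
qed

lemma antideriv_diff_unique:
  assumes c: "continuous_on UNIV g" and F: "\<And>x. (F has_real_derivative g x) (at x)"
  shows "F y - F z = antideriv g y - antideriv g z"
proof -
  have "\<forall>x. ((\<lambda>x. F x - antideriv g x) has_real_derivative 0) (at x)"
    using DERIV_diff[OF F has_real_derivative_antideriv[OF c]] by simp
  then have "F y - antideriv g y = F z - antideriv g z" by (rule DERIV_isconst_all)
  then show ?thesis by simp
qed

text \<open>For continuous \<open>g\<close>, \<open>moving_average h g y\<close> is the mean of \<open>g\<close> over \<open>[y, y + h]\<close>.\<close>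
definition moving_average :: "real \<Rightarrow> (real \<Rightarrow> real) \<Rightarrow> real \<Rightarrow> real" where
  "moving_average h g y = (antideriv g (y + h) - antideriv g y) / h"

definition diff_quotient :: "real \<Rightarrow> (real \<Rightarrow> real) \<Rightarrow> real \<Rightarrow> real" where
  "diff_quotient h g y = (g (y + h) - g y) / h"

lemma continuous_on_diff_quotient:
  assumes "continuous_on UNIV g"
  shows "continuous_on UNIV (diff_quotient h g)"
proof -
  have "continuous_on UNIV (\<lambda>y. g (y + h))"
    by (rule continuous_on_compose2[OF assms]) (auto intro: continuous_intros)
  then have "continuous_on UNIV (\<lambda>y. (1 / h) * (g (y + h) - g y))"
    by (intro continuous_intros assms)
  then show ?thesis by (simp add: diff_quotient_def[abs_def])
qed

lemma has_real_derivative_moving_average: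
  assumes c: "continuous_on UNIV g"
  shows "(moving_average h g has_real_derivative diff_quotient h g y) (at y)"
proof -
  have "((\<lambda>y. antideriv g (y + h)) has_real_derivative g (y + h)) (at y)"
    using has_real_derivative_antideriv[OF c, of "y + h"] DERIV_shift by blast
  then have "((\<lambda>y. (antideriv g (y + h) - antideriv g y) / h) has_real_derivative (g (y + h) - g y) / h) (at y)"
    by (intro DERIV_cdivide DERIV_diff has_real_derivative_antideriv[OF c])
  then show ?thesis by (simp add: moving_average_def[abs_def] diff_quotient_def)
qed

lemma continuous_on_moving_average: "continuous_on UNIV g \<Longrightarrow> continuous_on UNIV (moving_average h g)"
  using DERIV_isCont[OF has_real_derivative_moving_average] by (simp add: continuous_at_imp_continuous_on)

lemma moving_average_diff_quotient:
  assumes c: "continuous_on UNIV g"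
  shows "moving_average h (diff_quotient h g) = diff_quotient h (moving_average h g)"
proof
  fix y
  have "moving_average h g (y + h) - moving_average h g y
      = antideriv (diff_quotient h g) (y + h) - antideriv (diff_quotient h g) y"
    by (rule antideriv_diff_unique[OF continuous_on_diff_quotient[OF c] has_real_derivative_moving_average[OF c]])
  then show "moving_average h (diff_quotient h g) y = diff_quotient h (moving_average h g) y"
    by (simp add: moving_average_def[of h "diff_quotient h g"] diff_quotient_def[of h "moving_average h g"])
qed

lemma moving_average_mean_value:
  assumes c: "continuous_on UNIV g" and h: "h > 0"
  obtains \<xi> where "y \<le> \<xi>" "\<xi> \<le> y + h" "moving_average h g y = g \<xi>"
proof -
  obtain z where "y < z" "z < y + h" "antideriv g (y + h) - antideriv g y = (y + h - y) * g z"
    using MVT2[of y "y + h" "antideriv g" g] h has_real_derivative_antideriv[OF c] by auto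
  then show ?thesis using h that[of z] by (auto simp: moving_average_def)
qed

lemma continuous_on_funpow_moving_average:
  "continuous_on UNIV g \<Longrightarrow> continuous_on UNIV ((moving_average h ^^ j) g)"
  by (induction j) (simp_all add: continuous_on_moving_average)

lemma continuous_on_funpow_diff_quotient:
  "continuous_on UNIV g \<Longrightarrow> continuous_on UNIV ((diff_quotient h ^^ j) g)"
  by (induction j) (simp_all add: continuous_on_diff_quotient)

lemma funpow_moving_average_mean_value:
  assumes c: "continuous_on UNIV g" and h: "h > 0"
  obtains \<xi> where "y \<le> \<xi>" "\<xi> \<le> y + real j * h" "(moving_average h ^^ j) g y = g \<xi>"
proof (induction j arbitrary: y thesis)
  case 0 then show ?case by auto
next
  case (Suc j)
  obtain \<xi>1 where \<xi>1: "y \<le> \<xi>1" "\<xi>1 \<le> y + h" "moving_average h ((moving_average h ^^ j) g) y = (moving_average h ^^ j) g \<xi>1"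
    using moving_average_mean_value[OF continuous_on_funpow_moving_average[OF c] h] by blast
  obtain \<xi>2 where \<xi>2: "\<xi>1 \<le> \<xi>2" "\<xi>2 \<le> \<xi>1 + real j * h" "(moving_average h ^^ j) g \<xi>1 = g \<xi>2"
    using Suc.IH by blast
  show ?case using \<xi>1 \<xi>2 by (intro Suc.prems[of \<xi>2]) (auto simp: algebra_simps)
qed

lemma diff_quotient_funpow_moving_average:
  assumes "continuous_on UNIV g"
  shows "diff_quotient h ((moving_average h ^^ j) g) = (moving_average h ^^ j) (diff_quotient h g)"
proof (induction j)
  case (Suc j)
  have "diff_quotient h ((moving_average h ^^ Suc j) g) = moving_average h (diff_quotient h ((moving_average h ^^ j) g))"
    using moving_average_diff_quotient[OF continuous_on_funpow_moving_average[OF assms]] by simp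
  then show ?case using Suc by simp
qed simp

lemma mean_value_theorem_unordered:
  assumes "\<And>x. (g has_real_derivative g' x) (at x)"
  obtains z where "\<bar>z - x\<bar> \<le> \<bar>y - x\<bar>" "g y - g x = (y - x) * g' z"
proof (cases x y rule: linorder_cases)
  case less
  then obtain z where "x < z" "z < y" "g y - g x = (y - x) * g' z" using MVT2[of x y g g'] assms by blast
  then show ?thesis using that[of z] by auto
next
  case greater
  then obtain z where "y < z" "z < x" "g x - g y = (x - y) * g' z" using MVT2[of y x g g'] assms by blast
  then show ?thesis using that[of z] by (auto simp: algebra_simps)
qed (use that in auto)

lemma uniform_difference_quotient:
  assumes deriv: "\<And>x. (g has_real_derivative g' x) (at x)" and c: "continuous_on UNIV g'" and e: "e > 0"
  obtains \<delta> where "\<delta> > 0"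
    "\<And>y s. \<bar>y\<bar> \<le> M \<Longrightarrow> s \<noteq> 0 \<Longrightarrow> \<bar>s\<bar> < \<delta> \<Longrightarrow> \<bar>(g (y + s) - g y) / s - g' y\<bar> < e"
proof -
  have "uniformly_continuous_on (cball 0 (\<bar>M\<bar> + 1)) g'"
    by (intro compact_uniformly_continuous continuous_on_subset[OF c]) auto
  then obtain d where d: "d > 0" "\<And>x x'. x \<in> cball 0 (\<bar>M\<bar> + 1) \<Longrightarrow> x' \<in> cball 0 (\<bar>M\<bar> + 1) \<Longrightarrow>
      dist x' x < d \<Longrightarrow> dist (g' x') (g' x) < e"
    unfolding uniformly_continuous_on_def using e by metis
  show ?thesis
  proof (rule that[of "min d 1"])
    fix y s assume y: "\<bar>y\<bar> \<le> M" and s: "s \<noteq> 0" "\<bar>s\<bar> < min d 1"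
    obtain z where z: "\<bar>z - y\<bar> \<le> \<bar>y + s - y\<bar>" "g (y + s) - g y = (y + s - y) * g' z"
      using mean_value_theorem_unordered[OF deriv] by blast
    have "y \<in> cball 0 (\<bar>M\<bar> + 1)" "z \<in> cball 0 (\<bar>M\<bar> + 1)" "dist z y < d"
      using y s z(1) by (auto simp: dist_real_def)
    then have "\<bar>g' z - g' y\<bar> < e" using d(2) by (simp add: dist_real_def)
    moreover have "(g (y + s) - g y) / s = g' z" using z(2) s(1) by simp
    ultimately show "\<bar>(g (y + s) - g y) / s - g' y\<bar> < e" by simp
  qed (use d in simp)
qed

text \<open>Differentiating \<open>g (w t + b)\<close> with respect to the weight \<open>w\<close> gives \<open>t g' (w t + b)\<close>, and the
  difference quotients converge uniformly on bounded intervals.\<close>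
lemma uniform_weight_difference_quotient:
  assumes deriv: "\<And>x. (g has_real_derivative g' x) (at x)" and c: "continuous_on UNIV g'" and e: "e > 0"
  obtains \<delta> where "\<delta> > 0" "\<And>h t. h \<noteq> 0 \<Longrightarrow> \<bar>h\<bar> < \<delta> \<Longrightarrow> t \<in> {-R..R} \<Longrightarrow>
    \<bar>(g ((w + h) * t + b) - g (w * t + b)) / h - t * g' (w * t + b)\<bar> < e"
proof -
  define R0 where "R0 = max R 0"
  have R0: "R0 \<ge> 0" by (simp add: R0_def)
  obtain \<delta> where \<delta>: "\<delta> > 0" and dq: "\<And>y s. \<bar>y\<bar> \<le> \<bar>w\<bar> * R0 + \<bar>b\<bar> \<Longrightarrow> s \<noteq> 0 \<Longrightarrow> \<bar>s\<bar> < \<delta> \<Longrightarrow>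
      \<bar>(g (y + s) - g y) / s - g' y\<bar> < e / (R0 + 1)"
    using uniform_difference_quotient[OF deriv c, where e = "e / (R0 + 1)" and M = "\<bar>w\<bar> * R0 + \<bar>b\<bar>"] e R0
    by auto
  show ?thesis
  proof (rule that[of "\<delta> / (R0 + 1)"])
    fix h t assume h: "h \<noteq> 0" "\<bar>h\<bar> < \<delta> / (R0 + 1)" and t: "t \<in> {-R..R}"
    have tR: "\<bar>t\<bar> \<le> R0" using t by (auto simp: R0_def)
    show "\<bar>(g ((w + h) * t + b) - g (w * t + b)) / h - t * g' (w * t + b)\<bar> < e"
    proof (cases "t = 0")
      case False
      define y where "y = w * t + b"
      have "\<bar>y\<bar> \<le> \<bar>w * t\<bar> + \<bar>b\<bar>" unfolding y_def by (rule abs_triangle_ineq)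
      also have "\<bar>w * t\<bar> \<le> \<bar>w\<bar> * R0" using tR by (simp add: abs_mult mult_left_mono)
      finally have y: "\<bar>y\<bar> \<le> \<bar>w\<bar> * R0 + \<bar>b\<bar>" by simp
      have "\<bar>h * t\<bar> \<le> \<bar>h\<bar> * (R0 + 1)" using tR by (simp add: abs_mult mult_left_mono)
      also have "\<dots> < \<delta>" using h(2) pos_less_divide_eq[of "R0 + 1" "\<bar>h\<bar>" \<delta>] R0 by simp
      finally have small: "\<bar>(g (y + h * t) - g y) / (h * t) - g' y\<bar> < e / (R0 + 1)"
        using dq[OF y] h(1) False by simp
      have "(g ((w + h) * t + b) - g y) / h - t * g' y = t * ((g (y + h * t) - g y) / (h * t) - g' y)"
        using h(1) False by (simp add: y_def field_simps)
      then have "\<bar>(g ((w + h) * t + b) - g y) / h - t * g' y\<bar>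
          = \<bar>t\<bar> * \<bar>(g (y + h * t) - g y) / (h * t) - g' y\<bar>" by (simp add: abs_mult)
      also have "\<dots> \<le> R0 * (e / (R0 + 1))" using tR small by (intro mult_mono) auto
      also have "\<dots> < e" using e R0 by (simp add: field_simps)
      finally show ?thesis by (simp add: y_def)
    qed (use e in simp)
  qed (use \<delta> R0 in simp)
qed

lemma moving_average_riemann_sum:
  assumes c: "continuous_on UNIV g" and h: "h > 0" and e: "e > 0"
  obtains n :: nat where "n > 0"
    "\<And>y. y \<in> {-R..R} \<Longrightarrow> \<bar>moving_average h g y - (\<Sum>i<n. (1 / n) * g (y + real i * (h / n)))\<bar> < e"
proof -
  obtain \<delta> where \<delta>: "\<delta> > 0" and dq: "\<And>y s. \<bar>y\<bar> \<le> \<bar>R\<bar> + h \<Longrightarrow> s \<noteq> 0 \<Longrightarrow> \<bar>s\<bar> < \<delta> \<Longrightarrow>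
      \<bar>(antideriv g (y + s) - antideriv g y) / s - g y\<bar> < e"
    using uniform_difference_quotient[OF has_real_derivative_antideriv[OF c] c e] by blast
  obtain n :: nat where n: "h / \<delta> < real n" using reals_Archimedean2 by blast
  moreover have "0 < h / \<delta>" using h \<delta> by simp
  ultimately have npos: "n > 0" by simp
  have "h / n < \<delta>" using n npos \<delta> by (simp add: field_simps mult.commute)
  then have hn: "h / n \<noteq> 0" "\<bar>h / n\<bar> < \<delta>" using npos h by auto
  have "\<bar>moving_average h g y - (\<Sum>i<n. (1 / n) * g (y + real i * (h / n)))\<bar> < e" if y: "y \<in> {-R..R}" for y
  proof -
    define a where "a = (\<lambda>i. y + real i * (h / n))"
    define T where "T = (\<lambda>i. (antideriv g (a (Suc i)) - antideriv g (a i)) / h)"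
    have "(\<Sum>i<n. T i) = (antideriv g (a n) - antideriv g (a 0)) / h"
      unfolding T_def sum_divide_distrib[symmetric]
      using sum_lessThan_telescope[of "\<lambda>i. antideriv g (a i)" n] by simp
    also have "\<dots> = moving_average h g y" using npos by (simp add: a_def moving_average_def)
    finally have sumT: "(\<Sum>i<n. T i) = moving_average h g y" .
    have step: "\<bar>T i - (1 / n) * g (a i)\<bar> < e / n" if i: "i < n" for i
    proof -
      have "real i * (h / n) \<le> real n * (h / n)" using i h by (intro mult_right_mono) auto
      also have "\<dots> = h" using npos by simp
      finally have "real i * (h / n) \<le> h" .
      moreover have "0 \<le> real i * (h / n)" using h by simp
      ultimately have "\<bar>a i\<bar> \<le> \<bar>R\<bar> + h" using y by (auto simp: a_def abs_le_iff)
      from dq[OF this hn]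
      have "\<bar>(antideriv g (a i + h / n) - antideriv g (a i)) / (h / n) - g (a i)\<bar> < e" .
      moreover have "T i - (1 / n) * g (a i)
          = ((antideriv g (a i + h / n) - antideriv g (a i)) / (h / n) - g (a i)) / n"
        using h npos by (simp add: T_def a_def field_simps)
      ultimately show ?thesis using npos by (simp add: divide_strict_right_mono)
    qed
    have "\<bar>moving_average h g y - (\<Sum>i<n. (1 / n) * g (a i))\<bar> \<le> (\<Sum>i<n. \<bar>T i - (1 / n) * g (a i)\<bar>)"
      unfolding sumT[symmetric] sum_subtractf[symmetric] by (rule sum_abs)
    also have "\<dots> < (\<Sum>i<n. e / n)" using npos step by (intro sum_strict_mono) auto
    also have "\<dots> = e" using npos by simp
    finally show ?thesis by (simp add: a_def)
  qed
  with npos that show ?thesis by blast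
qed

text \<open>Riemann sums of \<open>g\<close> over \<open>[y, y + h]\<close> are combinations of translates of \<open>g\<close>.\<close>
lemma moving_average_in_shallow_closure:
  assumes N: "g \<in> shallow_closure \<sigma>" and c: "continuous_on UNIV g" and h: "h > 0"
  shows "moving_average h g \<in> shallow_closure \<sigma>"
proof (rule shallow_closure_real_intervalI)
  fix R e :: real assume e: "e > 0"
  obtain n :: nat where n: "\<And>y. y \<in> {-R..R} \<Longrightarrow>
      \<bar>moving_average h g y - (\<Sum>i<n. (1 / n) * g (y + real i * (h / n)))\<bar> < e"
    using moving_average_riemann_sum[OF c h e, of R] by blast
  have "(\<lambda>y. \<Sum>i<n. (1 / n) * g (1 * y + real i * (h / n))) \<in> shallow_closure \<sigma>"
    by (intro shallow_closure_sum shallow_closure_scale shallow_closure_affine N)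
  then show "\<exists>g'\<in>shallow_closure \<sigma>. \<forall>t\<in>{-R..R}. \<bar>moving_average h g t - g' t\<bar> < e"
    using n by (intro bexI[of _ "\<lambda>y. \<Sum>i<n. (1 / n) * g (1 * y + real i * (h / n))"]) auto
qed

lemma funpow_moving_average_in_shallow_closure:
  assumes "g \<in> shallow_closure \<sigma>" "continuous_on UNIV g" "h > 0"
  shows "(moving_average h ^^ j) g \<in> shallow_closure \<sigma>"
  by (induction j) (auto intro: moving_average_in_shallow_closure continuous_on_funpow_moving_average assms)

lemma monomial_times_derivative_in_shallow_closure:
  assumes deriv: "\<And>m x. m < k \<Longrightarrow> (D m has_real_derivative D (Suc m) x) (at x)"
    and cont: "\<And>m. m \<le> k \<Longrightarrow> continuous_on UNIV (D m)"
    and D0: "D 0 \<in> shallow_closure \<sigma>"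
  shows "m \<le> k \<Longrightarrow> (\<lambda>t. t ^ m * D m (w * t + b)) \<in> shallow_closure \<sigma>"
proof (induction m arbitrary: w)
  case 0 then show ?case using shallow_closure_affine[OF D0] by simp
next
  case (Suc m)
  have mk: "m < k" using Suc.prems by simp
  show ?case
  proof (rule shallow_closure_real_intervalI)
    fix R e :: real assume e: "e > 0"
    define R0 where "R0 = max R 0"
    have R0: "R0 \<ge> 0" by (simp add: R0_def)
    have "e / (R0 ^ m + 1) > 0" using e R0 by (simp add: add_nonneg_pos)
    then obtain \<delta> where \<delta>: "\<delta> > 0" and dq: "\<And>h t. h \<noteq> 0 \<Longrightarrow> \<bar>h\<bar> < \<delta> \<Longrightarrow> t \<in> {-R..R} \<Longrightarrow>
        \<bar>(D m ((w + h) * t + b) - D m (w * t + b)) / h - t * D (Suc m) (w * t + b)\<bar> < e / (R0 ^ m + 1)"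
      using uniform_weight_difference_quotient[OF deriv[OF mk] cont[OF Suc.prems]] by blast
    define h where "h = \<delta> / 2"
    have h: "h \<noteq> 0" "\<bar>h\<bar> < \<delta>" using \<delta> by (auto simp: h_def)
    define G where "G = (\<lambda>t. (1 / h) * (t ^ m * D m ((w + h) * t + b) - t ^ m * D m (w * t + b)))"
    have "G \<in> shallow_closure \<sigma>"
      unfolding G_def using Suc.IH mk by (intro shallow_closure_scale shallow_closure_diff) auto
    moreover have "\<bar>t ^ Suc m * D (Suc m) (w * t + b) - G t\<bar> < e" if t: "t \<in> {-R..R}" for t
    proof -
      let ?q = "(D m ((w + h) * t + b) - D m (w * t + b)) / h - t * D (Suc m) (w * t + b)"
      have tR: "\<bar>t\<bar> \<le> R0" using t by (auto simp: R0_def)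
      have "G t - t ^ Suc m * D (Suc m) (w * t + b) = t ^ m * ?q"
        unfolding G_def by (simp add: field_simps)
      then have "\<bar>t ^ Suc m * D (Suc m) (w * t + b) - G t\<bar> = \<bar>t\<bar> ^ m * \<bar>?q\<bar>"
        by (metis abs_minus_commute abs_mult power_abs)
      also have "\<dots> \<le> R0 ^ m * (e / (R0 ^ m + 1))"
        using tR dq[OF h t] by (intro mult_mono power_mono) auto
      also have "\<dots> < e" using e R0 by (simp add: field_simps add_pos_nonneg)
      finally show ?thesis .
    qed
    ultimately show "\<exists>g\<in>shallow_closure \<sigma>. \<forall>t\<in>{-R..R}. \<bar>t ^ Suc m * D (Suc m) (w * t + b) - g t\<bar> < e"
      by blast
  qed
qed

section \<open>Monomials are limits of networks\<close>

lemma poly_eq_synthetic_div: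
  fixes p :: "'a::comm_ring_1 poly"
  shows "poly p x = (x - a) * poly (synthetic_div p a) x + poly p a"
proof -
  have "poly p x = poly ([:-a, 1:] * synthetic_div p a + [:poly p a:]) x"
    by (simp only: synthetic_div_correct')
  then show ?thesis by (simp add: algebra_simps)
qed

text \<open>Divide out a root and induct on the degree.\<close>
lemma poly_bounded_degree_pointwise_limit:
  fixes P :: "nat \<Rightarrow> real poly"
  assumes "\<And>n. degree (P n) \<le> k" "infinite X" "\<And>x. x \<in> X \<Longrightarrow> (\<lambda>n. poly (P n) x) \<longlonglongrightarrow> f x"
  shows "\<exists>p. degree p \<le> k \<and> (\<forall>x\<in>X. f x = poly p x)"
  using assms
proof (induction k arbitrary: X f P)
  case 0
  obtain x0 where x0: "x0 \<in> X" using "0.prems"(2) by (metis finite.emptyI ex_in_conv)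
  have const: "poly (P n) x = coeff (P n) 0" for n x
    using "0.prems"(1)[of n] by (simp add: poly_altdef)
  have "f x = f x0" if "x \<in> X" for x
  proof -
    have "(\<lambda>n. coeff (P n) 0) \<longlonglongrightarrow> f x" using "0.prems"(3)[OF that] by (simp add: const)
    moreover have "(\<lambda>n. coeff (P n) 0) \<longlonglongrightarrow> f x0" using "0.prems"(3)[OF x0] by (simp add: const)
    ultimately show ?thesis by (rule LIMSEQ_unique)
  qed
  then show ?case by (intro exI[of _ "[:f x0:]"]) auto
next
  case (Suc k)
  obtain a where a: "a \<in> X" using Suc.prems(2) by (metis finite.emptyI ex_in_conv)
  define Q where "Q = (\<lambda>n. synthetic_div (P n) a)"
  have dQ: "degree (Q n) \<le> k" for n using Suc.prems(1)[of n] by (simp add: Q_def degree_synthetic_div)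
  have lim: "(\<lambda>n. poly (Q n) x) \<longlonglongrightarrow> (f x - f a) / (x - a)" if x: "x \<in> X - {a}" for x
  proof -
    have "(\<lambda>n. (poly (P n) x - poly (P n) a) / (x - a)) \<longlonglongrightarrow> (f x - f a) / (x - a)"
      using x a by (intro tendsto_intros Suc.prems(3)) auto
    moreover have "(poly (P n) x - poly (P n) a) / (x - a) = poly (Q n) x" for n
      using x poly_eq_synthetic_div[of "P n" x a] by (auto simp: Q_def field_simps)
    ultimately show ?thesis by simp
  qed
  have "infinite (X - {a})" by (simp add: Suc.prems(2))
  from Suc.IH[OF dQ this lim]
  obtain q where q: "degree q \<le> k" "\<forall>x\<in>X - {a}. (f x - f a) / (x - a) = poly q x" by blast
  define p where "p = [:f a:] + [:-a, 1:] * q"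
  have "degree ([:-a, 1:] * q) \<le> Suc k"
    using degree_mult_le[of "[:-a, 1:]" q] q(1) by simp
  then have "degree p \<le> Suc k" unfolding p_def by (intro degree_add_le) auto
  moreover have "f x = poly p x" if "x \<in> X" for x
  proof (cases "x = a")
    case False
    then have "(f x - f a) / (x - a) = poly q x" using q(2) that by auto
    then show ?thesis using False by (simp add: p_def field_simps)
  qed (simp add: p_def)
  ultimately show ?case by blast
qed

lemma derivative_chain_vanishing_imp_poly:
  assumes deriv: "\<And>m x. m < k \<Longrightarrow> (D m has_real_derivative D (Suc m) x) (at x)"
    and zero: "\<And>x. D k x = (0::real)"
  shows "\<exists>p. degree p \<le> k \<and> (\<forall>x. D 0 x = poly p x)"
proof -
  define D' where "D' = (\<lambda>m. if m \<le> k then D m else (\<lambda>_. 0))"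
  have "\<forall>m x. (D' m has_real_derivative D' (Suc m) x) (at x)"
  proof (intro allI)
    fix m x
    show "(D' m has_real_derivative D' (Suc m) x) (at x)"
    proof (cases "m < k")
      case False
      then have "D' m = (\<lambda>_. 0)" "D' (Suc m) x = 0" using zero by (auto simp: D'_def fun_eq_iff)
      then show ?thesis by simp
    qed (use deriv in \<open>simp add: D'_def\<close>)
  qed
  have "D 0 x = poly (\<Sum>m<k. monom (D' m 0 / fact m) m) x" for x
  proof -
    obtain t where "D' 0 x = (\<Sum>m<k. (D' m 0 / fact m) * x ^ m) + (D' k t / fact k) * x ^ k"
      using Maclaurin_all_le[OF refl \<open>\<forall>m x. _\<close>, of x k] by blast
    moreover have "D' k t = 0" "D' 0 = D 0" using zero by (simp_all add: D'_def)
    ultimately show ?thesis by (simp add: poly_sum poly_monom)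
  qed
  moreover have "degree (\<Sum>m<k. monom (D' m 0 / fact m) m) \<le> k"
    by (intro degree_sum_le) (auto intro: order_trans[OF degree_monom_le])
  ultimately show ?thesis by blast
qed

text \<open>The \<open>m\<close>-th derivative of the \<open>k\<close>-fold moving average of \<open>\<sigma>\<close>, for \<open>m \<le> k\<close>.\<close>
definition smoothing_chain :: "real \<Rightarrow> nat \<Rightarrow> (real \<Rightarrow> real) \<Rightarrow> nat \<Rightarrow> real \<Rightarrow> real" where
  "smoothing_chain h k \<sigma> m = (moving_average h ^^ (k - m)) ((diff_quotient h ^^ m) \<sigma>)"

lemma continuous_on_smoothing_chain:
  "continuous_on UNIV \<sigma> \<Longrightarrow> continuous_on UNIV (smoothing_chain h k \<sigma> m)"
  unfolding smoothing_chain_def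
  by (intro continuous_on_funpow_moving_average continuous_on_funpow_diff_quotient)

lemma has_real_derivative_smoothing_chain:
  assumes c: "continuous_on UNIV \<sigma>" and m: "m < k"
  shows "(smoothing_chain h k \<sigma> m has_real_derivative smoothing_chain h k \<sigma> (Suc m) x) (at x)"
proof -
  define j where "j = k - Suc m"
  let ?g = "(moving_average h ^^ j) ((diff_quotient h ^^ m) \<sigma>)"
  have "k - m = Suc j" using m by (simp add: j_def)
  then have "smoothing_chain h k \<sigma> m = moving_average h ?g" by (simp add: smoothing_chain_def)
  moreover have "(moving_average h ?g has_real_derivative diff_quotient h ?g x) (at x)"
    by (intro has_real_derivative_moving_average continuous_on_funpow_moving_average
        continuous_on_funpow_diff_quotient c)
  moreover have "diff_quotient h ?g = smoothing_chain h k \<sigma> (Suc m)"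
    using diff_quotient_funpow_moving_average[OF continuous_on_funpow_diff_quotient[OF c]]
    by (simp add: smoothing_chain_def j_def)
  ultimately show ?thesis by simp
qed

lemma monomial_in_shallow_closure_if_diff_quotient:
  assumes c: "continuous_on UNIV \<sigma>" and h: "h > 0" and nz: "(diff_quotient h ^^ k) \<sigma> y \<noteq> 0"
  shows "(\<lambda>t. t ^ k) \<in> shallow_closure \<sigma>"
proof -
  have "smoothing_chain h k \<sigma> 0 \<in> shallow_closure \<sigma>"
    unfolding smoothing_chain_def
    by (simp add: funpow_moving_average_in_shallow_closure subset_ucc_closure[THEN subsetD]
        activation_in_shallow_nets c h)
  then have "(\<lambda>t. t ^ k * smoothing_chain h k \<sigma> k (0 * t + y)) \<in> shallow_closure \<sigma>"
    by (intro monomial_times_derivative_in_shallow_closure has_real_derivative_smoothing_chain[OF c]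
        continuous_on_smoothing_chain[OF c]) auto
  then have "(\<lambda>t. t ^ k * (diff_quotient h ^^ k) \<sigma> y) \<in> shallow_closure \<sigma>"
    by (simp add: smoothing_chain_def)
  from shallow_closure_scale[OF this, of "1 / (diff_quotient h ^^ k) \<sigma> y"] show ?thesis
    using nz by simp
qed

lemma funpow_moving_average_tendsto:
  assumes c: "continuous_on UNIV \<sigma>"
  shows "(\<lambda>n. (moving_average (inverse (Suc n)) ^^ k) \<sigma> x) \<longlonglongrightarrow> \<sigma> x"
proof -
  let ?h = "\<lambda>n. inverse (real (Suc n))"
  have "\<forall>n. \<exists>\<xi>. x \<le> \<xi> \<and> \<xi> \<le> x + real k * ?h n \<and> (moving_average (?h n) ^^ k) \<sigma> x = \<sigma> \<xi>"
  proof
    fix n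
    obtain \<xi> where "x \<le> \<xi>" "\<xi> \<le> x + real k * ?h n" "(moving_average (?h n) ^^ k) \<sigma> x = \<sigma> \<xi>"
      using funpow_moving_average_mean_value[OF c, of "?h n" x k] by auto
    then show "\<exists>\<xi>. x \<le> \<xi> \<and> \<xi> \<le> x + real k * ?h n \<and> (moving_average (?h n) ^^ k) \<sigma> x = \<sigma> \<xi>"
      by blast
  qed
  then obtain \<xi> where \<xi>: "\<forall>n. x \<le> \<xi> n \<and> \<xi> n \<le> x + real k * ?h n \<and> (moving_average (?h n) ^^ k) \<sigma> x = \<sigma> (\<xi> n)"
    by (rule choice[THEN exE])
  have lo: "x \<le> \<xi> n" and hi: "\<xi> n \<le> x + real k * ?h n"
    and eq: "(moving_average (?h n) ^^ k) \<sigma> x = \<sigma> (\<xi> n)" for n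
    using \<xi> by blast+
  have "(\<lambda>n. x + real k * ?h n) \<longlonglongrightarrow> x + real k * 0"
    by (rule tendsto_add[OF tendsto_const tendsto_mult[OF tendsto_const LIMSEQ_inverse_real_of_nat]])
  then have up: "(\<lambda>n. x + real k * ?h n) \<longlonglongrightarrow> x" by simp
  have "\<xi> \<longlonglongrightarrow> x"
    by (rule tendsto_sandwich[OF always_eventually always_eventually tendsto_const up]) (use lo hi in blast)+
  moreover have "isCont \<sigma> x" using c by (simp add: continuous_on_eq_continuous_at)
  ultimately have "(\<lambda>n. \<sigma> (\<xi> n)) \<longlonglongrightarrow> \<sigma> x" by (rule isCont_tendsto_compose[rotated])
  then show ?thesis by (simp only: eq)
qed

lemma poly_if_diff_quotients_vanish:
  assumes c: "continuous_on UNIV \<sigma>" and zero: "\<And>h y. h > 0 \<Longrightarrow> (diff_quotient h ^^ k) \<sigma> y = 0"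
  shows "is_polynomial_fun \<sigma>"
proof -
  let ?h = "\<lambda>n. inverse (real (Suc n))"
  have "\<exists>p. degree p \<le> k \<and> (\<forall>x. smoothing_chain (?h n) k \<sigma> 0 x = poly p x)" for n
  proof -
    have "smoothing_chain (?h n) k \<sigma> k x = 0" for x
      using zero[of "?h n" x] by (simp add: smoothing_chain_def)
    from derivative_chain_vanishing_imp_poly[OF has_real_derivative_smoothing_chain[OF c] this]
    show ?thesis .
  qed
  then have "\<forall>n. \<exists>p. degree p \<le> k \<and> (\<forall>x. (moving_average (?h n) ^^ k) \<sigma> x = poly p x)"
    by (simp add: smoothing_chain_def)
  then obtain P where P: "\<forall>n. degree (P n) \<le> k \<and> (\<forall>x. (moving_average (?h n) ^^ k) \<sigma> x = poly (P n) x)"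
    by (rule choice[THEN exE])
  have "(\<lambda>n. poly (P n) x) \<longlonglongrightarrow> \<sigma> x" for x
    using funpow_moving_average_tendsto[OF c, of k x] P by simp
  then obtain p where "degree p \<le> k" "\<forall>x\<in>UNIV. \<sigma> x = poly p x"
    using poly_bounded_degree_pointwise_limit[of P k UNIV \<sigma>] P infinite_UNIV_char_0 by blast
  then show ?thesis unfolding is_polynomial_fun_def by blast
qed

text \<open>Either some \<open>k\<close>-th difference quotient of \<open>\<sigma>\<close> is nonzero somewhere, and differentiating
  the smoothed \<open>\<sigma>\<close> \<open>k\<close> times in the weight yields \<open>t\<^sup>k\<close>, or all of them vanish and \<open>\<sigma>\<close> is a
  polynomial.\<close>
theorem monomial_in_shallow_closure:
  assumes c: "continuous_on UNIV \<sigma>" and np: "\<not> is_polynomial_fun \<sigma>"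
  shows "(\<lambda>t. t ^ k) \<in> shallow_closure \<sigma>"
proof (cases "\<exists>h>0. \<exists>y. (diff_quotient h ^^ k) \<sigma> y \<noteq> 0")
  case True
  then obtain h y where "h > 0" "(diff_quotient h ^^ k) \<sigma> y \<noteq> 0" by blast
  then show ?thesis by (rule monomial_in_shallow_closure_if_diff_quotient[OF c])
next
  case False
  then have "is_polynomial_fun \<sigma>" by (intro poly_if_diff_quotients_vanish[OF c]) auto
  with np show ?thesis by contradiction
qed

section \<open>Universal approximation by shallow networks\<close>

lemma poly_in_shallow_closure:
  assumes "continuous_on UNIV \<sigma>" "\<not> is_polynomial_fun \<sigma>"
  shows "poly p \<in> shallow_closure \<sigma>"
proof -
  have "(\<lambda>t. \<Sum>i\<le>degree p. coeff p i * t ^ i) \<in> shallow_closure \<sigma>"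
    by (intro shallow_closure_sum shallow_closure_scale monomial_in_shallow_closure[OF assms])
  then show ?thesis by (simp add: poly_altdef[abs_def])
qed

theorem continuous_in_shallow_closure_real:
  fixes f :: "real \<Rightarrow> real"
  assumes \<sigma>: "continuous_on UNIV \<sigma>" "\<not> is_polynomial_fun \<sigma>" and f: "continuous_on UNIV f"
  shows "f \<in> shallow_closure \<sigma>"
proof (rule shallow_closure_real_intervalI)
  fix R e :: real assume e: "e > 0"
  have "\<exists>g. (\<exists>p. g = poly p) \<and> (\<forall>x\<in>{-R..R}. \<bar>f x - g x\<bar> < e)"
  proof (rule Stone_Weierstrass_HOL[of "{-R..R}" "\<lambda>g. \<exists>p. g = poly p"])
    show "\<exists>p. (\<lambda>x. c) = poly p" for c by (rule exI[of _ "[:c:]"]) (simp add: fun_eq_iff)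
    show "continuous_on {-R..R} g" if "\<exists>p. g = poly p" for g
      using that by (auto intro!: continuous_on_poly continuous_on_id)
    show "\<exists>p. (\<lambda>x. g x + h x) = poly p" "\<exists>p. (\<lambda>x. g x * h x) = poly p"
      if gh: "(\<exists>p. g = poly p) \<and> (\<exists>p. h = poly p)" for g h
    proof -
      obtain p q where pq: "g = poly p" "h = poly q" using gh by blast
      show "\<exists>p. (\<lambda>x. g x + h x) = poly p"
        using pq by (intro exI[of _ "p + q"]) (simp add: fun_eq_iff)
      show "\<exists>p. (\<lambda>x. g x * h x) = poly p"
        using pq by (intro exI[of _ "p * q"]) (simp add: fun_eq_iff)
    qed
    show "\<exists>g. (\<exists>p. g = poly p) \<and> g x \<noteq> g y" if "x \<in> {-R..R} \<and> y \<in> {-R..R} \<and> x \<noteq> y" for x y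
      using that by (intro exI[of _ "poly [:0, 1:]"]) auto
  qed (simp_all add: e continuous_on_subset[OF f])
  then show "\<exists>g\<in>shallow_closure \<sigma>. \<forall>t\<in>{-R..R}. \<bar>f t - g t\<bar> < e"
    using poly_in_shallow_closure[OF \<sigma>] by blast
qed

definition exp_sum :: "(real \<times> 'a) list \<Rightarrow> 'a::real_inner \<Rightarrow> real" where
  "exp_sum cs x = (\<Sum>(c, a)\<leftarrow>cs. c * exp (a \<bullet> x))"

lemma exp_sum_Nil [simp]: "exp_sum [] x = 0"
  by (simp add: exp_sum_def)

lemma exp_sum_Cons [simp]: "exp_sum ((c, a) # cs) x = c * exp (a \<bullet> x) + exp_sum cs x"
  by (simp add: exp_sum_def)

lemma exp_sum_append: "exp_sum (cs @ ds) x = exp_sum cs x + exp_sum ds x"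
  by (simp add: exp_sum_def)

lemma exp_sum_mult:
  "exp_sum cs x * exp_sum ds x = exp_sum (concat (map (\<lambda>(c, a). map (\<lambda>(d, b). (c * d, a + b)) ds) cs)) x"
proof (induction cs)
  case (Cons ca cs)
  have "c * exp (a \<bullet> x) * exp_sum ds x = exp_sum (map (\<lambda>(d, b). (c * d, a + b)) ds) x" for c a
    by (induction ds) (auto simp: algebra_simps exp_add inner_add_left)
  with Cons show ?case by (cases ca) (simp add: exp_sum_append distrib_right)
qed simp

lemma continuous_on_exp_sum: "continuous_on S (exp_sum cs)"
proof (induction cs)
  case (Cons ca cs)
  then show ?case
    by (cases ca) (simp add: exp_sum_def[abs_def] continuous_intros)
qed (simp add: exp_sum_def[abs_def])

lemma exp_sum_in_shallow_closure:
  assumes "continuous_on UNIV \<sigma>" "\<not> is_polynomial_fun \<sigma>"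
  shows "exp_sum cs \<in> shallow_closure \<sigma>"
proof (induction cs)
  case Nil
  have "(\<lambda>x. 0 * exp (0 \<bullet> x + 0)) \<in> shallow_closure \<sigma>"
    by (intro shallow_closure_scale shallow_closure_ridge continuous_in_shallow_closure_real assms
        continuous_on_exp continuous_on_id)
  then show ?case by (simp add: exp_sum_def[abs_def])
next
  case (Cons ca cs)
  obtain c a where ca: "ca = (c, a)" by (cases ca)
  have "(\<lambda>x. c * exp (a \<bullet> x + 0) + exp_sum cs x) \<in> shallow_closure \<sigma>"
    by (intro shallow_closure_add shallow_closure_scale shallow_closure_ridge
        continuous_in_shallow_closure_real assms continuous_on_exp continuous_on_id Cons)
  then show ?case by (simp add: ca fun_eq_iff)
qed

text \<open>Exponentials of linear forms are ridge functions and span a point-separating algebra, so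
  by Stone--Weierstrass the one-variable result extends to several variables.\<close>
theorem continuous_in_shallow_closure:
  fixes f :: "'a::euclidean_space \<Rightarrow> real"
  assumes \<sigma>: "continuous_on UNIV \<sigma>" "\<not> is_polynomial_fun \<sigma>" and f: "continuous_on UNIV f"
  shows "f \<in> shallow_closure \<sigma>"
proof (rule ucc_closure_approxI)
  fix K :: "'a set" and e :: real
  assume K: "compact K" and e: "e > 0"
  have "\<exists>g. (\<exists>cs. g = exp_sum cs) \<and> (\<forall>x\<in>K. \<bar>f x - g x\<bar> < e)"
  proof (rule Stone_Weierstrass_HOL[of K "\<lambda>g. \<exists>cs. g = exp_sum cs"])
    show "\<exists>cs. (\<lambda>x. c) = exp_sum cs" for c by (intro exI[of _ "[(c, 0)]"]) (simp add: fun_eq_iff)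
    show "continuous_on K g" if "\<exists>cs. g = exp_sum cs" for g using that continuous_on_exp_sum by blast
    show "\<exists>cs. (\<lambda>x. g x + h x) = exp_sum cs" "\<exists>cs. (\<lambda>x. g x * h x) = exp_sum cs"
      if gh: "(\<exists>cs. g = exp_sum cs) \<and> (\<exists>cs. h = exp_sum cs)" for g h
    proof -
      obtain cs ds where cs: "g = exp_sum cs" "h = exp_sum ds" using gh by blast
      show "\<exists>cs. (\<lambda>x. g x + h x) = exp_sum cs"
        using cs by (intro exI[of _ "cs @ ds"]) (simp add: fun_eq_iff exp_sum_append)
      show "\<exists>cs. (\<lambda>x. g x * h x) = exp_sum cs"
        using cs by (intro exI[of _ "concat (map (\<lambda>(c, a). map (\<lambda>(d, b). (c * d, a + b)) ds) cs)"])
          (simp add: fun_eq_iff exp_sum_mult)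
    qed
    show "\<exists>g. (\<exists>cs. g = exp_sum cs) \<and> g x \<noteq> g y" if "x \<in> K \<and> y \<in> K \<and> x \<noteq> y" for x y
    proof (intro exI[of _ "exp_sum [(1, x - y)]"] conjI)
      have "(x - y) \<bullet> x - (x - y) \<bullet> y = (x - y) \<bullet> (x - y)" by (simp add: inner_diff_right)
      then have "(x - y) \<bullet> x \<noteq> (x - y) \<bullet> y" using that by auto
      then show "exp_sum [(1, x - y)] x \<noteq> exp_sum [(1, x - y)] y" by simp
    qed blast
  qed (simp_all add: K e continuous_on_subset[OF f])
  then show "\<exists>g\<in>shallow_closure \<sigma>. \<forall>x\<in>K. \<bar>f x - g x\<bar> < e"
    using exp_sum_in_shallow_closure[OF \<sigma>] by blast
qed

section \<open>Vector-valued networks\<close>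

lemma sum_list_concat_real: "sum_list (concat xss) = sum_list (map sum_list (xss :: real list list))"
  by (induction xss) auto

lemma sum_nth_concat_tagged:
  fixes xs :: "'n::finite \<Rightarrow> 'b list" and F :: "'b \<Rightarrow> real"
  assumes "distinct js" "set js = UNIV"
  defines "L \<equiv> concat (map (\<lambda>j. map (Pair j) (xs j)) js)"
  shows "(\<Sum>k<length L. if fst (L ! k) = j then F (snd (L ! k)) else 0) = sum_list (map F (xs j))"
proof -
  define H where "H = (\<lambda>(j', z). if j' = j then F z else 0)"
  have "(\<Sum>k<length L. if fst (L ! k) = j then F (snd (L ! k)) else 0) = sum_list (map H L)"
    by (simp add: sum_list_sum_nth atLeast0LessThan H_def case_prod_beta)
  also have "\<dots> = sum_list (map (\<lambda>j'. sum_list (map H (map (Pair j') (xs j')))) js)"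
    unfolding L_def by (simp add: map_concat sum_list_concat_real comp_def)
  also have "\<dots> = sum_list (map (\<lambda>j'. if j' = j then sum_list (map F (xs j)) else 0) js)"
    by (intro arg_cong[where f = sum_list] map_cong) (auto simp: H_def comp_def)
  also have "\<dots> = (\<Sum>j'\<in>UNIV. if j' = j then sum_list (map F (xs j)) else 0)"
    using assms by (simp add: sum_list_distinct_conv_sum_set)
  finally show ?thesis by simp
qed

text \<open>A family of scalar shallow networks, one per output coordinate, is realised by a single
  hidden layer: the hidden units of all coordinates are concatenated, each tagged with its output
  coordinate, and the output weights pick out the units of the right tag.\<close>
lemma shallow_nets_in_NN:
  fixes ps :: "'n::finite \<Rightarrow> (real \<times> (real^'m) \<times> real) list"
  shows "(\<lambda>x. \<chi> j. shallow_net \<sigma> (ps j) x) \<in> NN \<sigma>"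
proof -
  obtain js :: "'n list" where js: "set js = UNIV" "distinct js"
    using finite_distinct_list[of "UNIV :: 'n set"] by auto
  define L where "L = concat (map (\<lambda>j. map (Pair j) (ps j)) js)"
  define h where "h = (\<lambda>x i. if i < length L
      then \<sigma> ((\<Sum>j'\<in>UNIV. fst (snd (snd (L ! i))) $ j' * x $ j') + snd (snd (snd (L ! i)))) else 0)"
  define W where "W = (\<lambda>j k. if fst (L ! k) = j then fst (snd (L ! k)) else 0)"
  have hidden: "nn_hidden \<sigma> h (length L)" unfolding h_def by (rule nn_hidden.first)
  have "(\<Sum>k<length L. W j k * h x k) = shallow_net \<sigma> (ps j) x" for x j
  proof -
    have "(\<Sum>k<length L. W j k * h x k) = (\<Sum>k<length L. if fst (L ! k) = j
        then (\<lambda>(c, a, b). c * \<sigma> (a \<bullet> x + b)) (snd (L ! k)) else 0)"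
      by (intro sum.cong) (auto simp: W_def h_def inner_vec_def case_prod_beta mult.commute)
    also have "\<dots> = shallow_net \<sigma> (ps j) x"
      unfolding L_def shallow_net_def by (rule sum_nth_concat_tagged[OF js(2,1)])
    finally show ?thesis .
  qed
  then have "\<exists>h w W b. nn_hidden \<sigma> h w \<and>
      (\<lambda>x. \<chi> j. shallow_net \<sigma> (ps j) x) = (\<lambda>x. \<chi> j. (\<Sum>k<w. W j k * h x k) + b j)"
    using hidden by (intro exI[of _ h] exI[of _ "length L"] exI[of _ W] exI[of _ "\<lambda>_. 0"]) simp
  then show ?thesis unfolding NN_def by blast
qed

theorem NN_ucc_dense:
  assumes "continuous_on UNIV \<sigma>" "\<not> is_polynomial_fun \<sigma>"
  shows "ucc_dense UNIV UNIV dist (NN \<sigma> :: (real^'m \<Rightarrow> real^'n) set)"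
  unfolding ucc_dense_def
proof (intro allI impI, elim conjE)
  fix g :: "real^'m \<Rightarrow> real^'n" and K :: "(real^'m) set" and e :: real
  assume g: "continuous_on UNIV g" and K: "compact K" and e: "e > 0"
  define e' where "e' = e / real CARD('n)"
  have e': "e' > 0" using e by (simp add: e'_def)
  have "\<forall>j. \<exists>ps. \<forall>x\<in>K. \<bar>g x $ j - shallow_net \<sigma> ps x\<bar> < e'"
  proof
    fix j
    have "(\<lambda>x. g x $ j) \<in> shallow_closure \<sigma>"
      by (intro continuous_in_shallow_closure assms continuous_on_component g)
    from ucc_closureD[OF this K e'] show "\<exists>ps. \<forall>x\<in>K. \<bar>g x $ j - shallow_net \<sigma> ps x\<bar> < e'"
      by (auto simp: shallow_nets_def)
  qed
  then obtain ps where ps: "\<forall>j. \<forall>x\<in>K. \<bar>g x $ j - shallow_net \<sigma> (ps j) x\<bar> < e'"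
    by (rule choice[THEN exE])
  show "\<exists>f\<in>NN \<sigma>. \<forall>x\<in>K. dist (f x) (g x) < e"
  proof (intro bexI[OF _ shallow_nets_in_NN[of \<sigma> ps]] ballI)
    fix x assume x: "x \<in> K"
    have "dist (\<chi> j. shallow_net \<sigma> (ps j) x) (g x) \<le> (\<Sum>j\<in>UNIV. \<bar>shallow_net \<sigma> (ps j) x - g x $ j\<bar>)"
      using norm_le_l1_cart[of "(\<chi> j. shallow_net \<sigma> (ps j) x) - g x"] by (simp add: dist_norm)
    also have "\<dots> < (\<Sum>j\<in>(UNIV::'n set). e')"
      using ps x by (intro sum_strict_mono) (auto simp: abs_minus_commute)
    also have "\<dots> = e" by (simp add: e'_def)
    finally show "dist ((\<lambda>x. \<chi> j. shallow_net \<sigma> (ps j) x) x) (g x) < e" by simp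
  qed
qed

theorem mainTheorem9:
  fixes \<kappa>d :: "real^'m \<Rightarrow> real^'d^'d"
    and \<kappa>D :: "real^'n \<Rightarrow> real^'D^'D"
    and A :: "real^'d^'d" and B :: "real^'D^'D"
  assumes "CARD('m) = CARD('d) * (CARD('d) + 1) div 2"
    and "CARD('n) = CARD('D) * (CARD('D) + 1) div 2"
    and "linear \<kappa>d" and "inj \<kappa>d" and "range \<kappa>d = sym_mats"
    and "linear \<kappa>D" and "inj \<kappa>D" and "range \<kappa>D = sym_mats"
    and "A \<in> spd" and "B \<in> spd"
  shows "(\<forall>F :: (real^'m \<Rightarrow> real^'n) set.
            (\<forall>f\<in>F. continuous_on UNIV f) \<and> ucc_dense UNIV UNIV dist F \<longrightarrow>
            ucc_dense spd spd ai_dist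
              ((\<lambda>f. RExp B \<circ> \<kappa>D \<circ> f \<circ> inv \<kappa>d \<circ> RLog A) ` F))
       \<and> (\<forall>\<sigma>. continuous_on UNIV \<sigma> \<and> locally_bounded \<sigma> \<and> \<not> is_polynomial_fun \<sigma> \<longrightarrow>
            ucc_dense spd spd ai_dist
              ((\<lambda>f. RExp B \<circ> \<kappa>D \<circ> f \<circ> inv \<kappa>d \<circ> RLog A) ` (NN \<sigma> :: (real^'m \<Rightarrow> real^'n) set)))"
proof -
  have chart_A: "homeomorphism spd UNIV (inv \<kappa>d \<circ> RLog A) (RExp A \<circ> \<kappa>d)"
    using assms by (intro homeomorphism_spd_chart)
  have chart_B: "homeomorphism spd UNIV (inv \<kappa>D \<circ> RLog B) (RExp B \<circ> \<kappa>D)"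
    using assms by (intro homeomorphism_spd_chart)
  have transfer: "ucc_dense spd spd ai_dist ((\<lambda>f. RExp B \<circ> \<kappa>D \<circ> f \<circ> inv \<kappa>d \<circ> RLog A) ` F)"
    if "ucc_dense UNIV UNIV dist F" for F :: "(real^'m \<Rightarrow> real^'n) set"
    using ucc_dense_chart_transfer[OF chart_A chart_B continuous_on_ai_dist ai_dist_self that]
    by (simp add: o_assoc)
  show ?thesis
    using transfer NN_ucc_dense by blast
qed

end
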